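(* Let $q\in(0,2]$, $c\ge1$, and let $f,g:\mathbb{R}\to\mathbb{R}$ be continuous nondecreasing with $f$ positive. Let $a\in\mathbb{R}$, $R>0$, and let $\varphi$ be a solution on $[0,R)$ of $$\varphi''+\frac{c-1}{r}\varphi'=f(\varphi)+g(\varphi)|\varphi'|^q,\qquad\varphi(0)=a,\qquad\varphi'(0)=0 .$$ Then for every $r\in[0,R)$: $$r\ge\begin{cases}\displaystyle\frac{1}{2^{2/(2-q)}}\int_a^{\varphi(r)}\frac{dt}{\left(\int_a^tf(s)\,ds\right)^{1/2}+\left(\int_a^tg^+(s)\,ds\right)^{1/(2-q)}} & q<2,\\ \displaystyle\int_a^{\varphi(r)}\frac{dt}{\left(2\int_a^te^{2\int_s^tg^+(\rho)\,d\rho}f(s)\,ds\right)^{1/2}} & q=2;\end{cases}$$ if moreover $g(a)\ge0$, $$r\le\begin{cases}\displaystyle2\left(\frac{c}{2-q}\right)^{1/(2-q)}\int_a^{\varphi(r)}\frac{dt}{\left(\int_a^tf(s)\,ds\right)^{1/2}+\left(\int_a^tg^+(s)\,ds\right)^{1/(2-q)}} & q<2,\\ \displaystyle\sqrt{\frac c2}\int_a^{\varphi(r)}\frac{dt}{\left(\int_a^te^{\frac2c\int_s^tg^+(\tau)\,d\tau}f(s)\,ds\right)^{1/2}} & q=2.\end{cases}$$ Furthermore, for every $r\in(0,R)$, $$r\le\frac{c^{1/q}}{\sqrt q}\int_a^{\varphi(r)}\frac{dt}{\left(\int_a^te^{-2\int_s^t\left(\frac{g^-(\tau)}{f(\tau)}\right)^{2/q}f(\tau)\,d\tau}f(s)\,ds\right)^{1/2}},$$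 and, if $g(t)\le0$ for all $t\in\mathbb{R}$, $$r\ge\frac{1}{\sqrt2}\int_a^{\varphi(r)}\frac{dt}{\left(\int_a^te^{-2\int_s^t\left(\frac{g^-(\tau)}{f(\tau)}\right)^{2/q}f(\tau)\,d\tau}f(s)\,ds\right)^{1/2}}.$$
   Context: A solution on $[0,R)$ is a function $\varphi\in C^2((0,R))\cap C([0,R))$ satisfying the ODE on $(0,R)$, $\varphi(0)=a$, $\lim_{r\to0^+}\varphi'(r)=0=\varphi'(0)$, and such that $\lim_{r\to0^+}\varphi''(r)$ exists in $\mathbb{R}$. $g^+=\max(g,0)$, $g^-=\max(-g,0)$. *)

theory Defs
  imports "HOL-Analysis.Analysis"
begin

definition oint :: "real \<Rightarrow> real \<Rightarrow> (real \<Rightarrow> real) \<Rightarrow> real" where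
  "oint a b h = (if a \<le> b then integral {a..b} h else - integral {b..a} h)"

definition ode_solution ::
  "real \<Rightarrow> real \<Rightarrow> (real \<Rightarrow> real) \<Rightarrow> (real \<Rightarrow> real) \<Rightarrow> real \<Rightarrow> real \<Rightarrow> (real \<Rightarrow> real) \<Rightarrow> bool" where
  "ode_solution q c f g a R \<phi> \<longleftrightarrow>
     (\<exists>\<phi>' \<phi>''.
        continuous_on {0..<R} \<phi> \<and>
        (\<forall>r\<in>{0<..<R}. (\<phi> has_real_derivative \<phi>' r) (at r) \<and>
                        (\<phi>' has_real_derivative \<phi>'' r) (at r)) \<and>
        continuous_on {0<..<R} \<phi>'' \<and>
        (\<forall>r\<in>{0<..<R}. \<phi>'' r + (c - 1) / r * \<phi>' r = f (\<phi> r) + g (\<phi> r) * \<bar>\<phi>' r\<bar> powr q) \<and>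
        \<phi> 0 = a \<and>
        (\<phi>' \<longlongrightarrow> 0) (at_right 0) \<and>
        (\<phi> has_real_derivative 0) (at 0 within {0..<R}) \<and>
        (\<exists>L. (\<phi>'' \<longlongrightarrow> L) (at_right 0)))"

end

theory Submission
  imports Defs
begin

text \<open>Since \<open>\<phi>' > 0\<close> on \<open>(0, R)\<close>, the substitution \<open>t = \<phi> s\<close> turns each bound on \<open>r\<close> into a
  pointwise bound \<open>M h(\<phi>) \<le> \<phi>'\<close> or \<open>\<phi>' \<le> M h(\<phi>)\<close> on the gradient, \<open>1 / h\<close> being the integrand.
  The gradient bounds come from comparison arguments for \<open>\<phi>'\<^sup>2\<close> against exponentially weighted
  primitives \<open>\<integral>\<^sub>a\<^sup>t exp (\<kappa> \<integral>\<^sub>s\<^sup>t w) f(s) ds\<close>. They use \<open>\<phi>'' \<le> f(\<phi>) + g\<^sup>+(\<phi>) \<phi>'\<^sup>q\<close>, and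
  \<open>\<phi>'' \<ge> (f(\<phi>) + g(\<phi>) \<phi>'\<^sup>q) / c\<close> wherever \<open>g(\<phi>) \<ge> 0\<close>, since there the right-hand side is
  nondecreasing in \<open>r\<close>; where \<open>g(\<phi>) < 0\<close>, Young's inequality trades \<open>g\<^sup>- \<phi>'\<^sup>q\<close> for a multiple
  of \<open>(g\<^sup>- / f)\<^bsup>2/q\<^esup> f \<phi>'\<^sup>2\<close> and a fraction of \<open>f\<close>.\<close>

section \<open>Comparison principles and substitution\<close>

lemma nonpos_if_deriv_nonpos_where_pos:
  fixes D D' :: "real \<Rightarrow> real"
  assumes r1: "0 \<le> r1" and cont: "continuous_on {0..r1} D" and D0: "D 0 \<le> 0"
    and der: "\<And>s. 0 < s \<Longrightarrow> s < r1 \<Longrightarrow> (D has_real_derivative D' s) (at s)"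
    and neg: "\<And>s. 0 < s \<Longrightarrow> s < r1 \<Longrightarrow> D s > 0 \<Longrightarrow> D' s \<le> 0"
  shows "D r1 \<le> 0"
proof (rule ccontr)
  assume "\<not> D r1 \<le> 0"
  hence pos: "D r1 > 0" by simp
  define S where "S = {s \<in> {0..r1}. D s \<le> 0}"
  have "closed S" unfolding S_def
    by (rule continuous_on_closed_Collect_le[OF cont continuous_on_const closed_atLeastAtMost])
  moreover have "S \<noteq> {}" using D0 r1 by (auto simp: S_def)
  moreover have "bdd_above S" by (auto simp: S_def bdd_above_def)
  ultimately have s0S: "Sup S \<in> S" by (meson closed_contains_Sup)
  define s0 where "s0 = Sup S"
  have s0: "0 \<le> s0" "s0 \<le> r1" "D s0 \<le> 0" using s0S by (auto simp: S_def s0_def)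
  hence lt: "s0 < r1" using pos by (metis order.not_eq_order_implies_strict not_le)
  have "continuous_on {s0..r1} D" using continuous_on_subset[OF cont] s0 by auto
  moreover have "\<forall>x. s0 < x \<and> x < r1 \<longrightarrow> D differentiable (at x)"
    using der s0 by (metis order.strict_trans1 real_differentiable_def)
  ultimately obtain l z where z: "s0 < z" "z < r1" "DERIV D z :> l" "D r1 - D s0 = (r1 - s0) * l"
    using MVT[OF lt] by blast
  have "z \<notin> S"
  proof
    assume "z \<in> S"
    hence "z \<le> Sup S" using \<open>bdd_above S\<close> by (rule cSup_upper)
    thus False using z s0_def by simp
  qed
  hence "D z > 0" using z s0 by (auto simp: S_def)
  hence "D' z \<le> 0" using neg z s0 by auto
  moreover have "l = D' z" using DERIV_unique[OF z(3) der] z s0 by simp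
  ultimately have "D r1 - D s0 \<le> 0" using z lt by (simp add: mult_nonneg_nonpos)
  thus False using s0 pos by linarith
qed

lemma nonneg_if_deriv_nonneg_where_neg:
  fixes D D' :: "real \<Rightarrow> real"
  assumes r1: "0 \<le> r1" and cont: "continuous_on {0..r1} D" and D0: "D 0 \<ge> 0"
    and der: "\<And>s. 0 < s \<Longrightarrow> s < r1 \<Longrightarrow> (D has_real_derivative D' s) (at s)"
    and neg: "\<And>s. 0 < s \<Longrightarrow> s < r1 \<Longrightarrow> D s < 0 \<Longrightarrow> D' s \<ge> 0"
  shows "D r1 \<ge> 0"
proof -
  have "- D r1 \<le> 0"
  proof (rule nonpos_if_deriv_nonpos_where_pos[where D="\<lambda>s. - D s" and D' = "\<lambda>s. - D' s"])
    show "continuous_on {0..r1} (\<lambda>s. - D s)" using cont by (intro continuous_intros)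
    show "((\<lambda>s. - D s) has_real_derivative - D' s) (at s)" if "0 < s" "s < r1" for s
      using der[OF that] by (intro derivative_eq_intros) auto
  qed (use r1 D0 neg in auto)
  thus ?thesis by simp
qed

lemma obtain_first_point:
  fixes P :: "real \<Rightarrow> bool"
  assumes closed: "closed {s \<in> {d..x}. P s}"
    and d: "0 < d" and before: "\<And>s. 0 < s \<Longrightarrow> s < d \<Longrightarrow> \<not> P s" and x: "0 < x" "P x"
  obtains T where "d \<le> T" "T \<le> x" "P T" "\<And>s. 0 < s \<Longrightarrow> s < T \<Longrightarrow> \<not> P s"
proof -
  define S where "S = {s \<in> {d..x}. P s}"
  have "d \<le> x" using before[of x] x by force
  hence "S \<noteq> {}" using x by (auto simp: S_def)
  moreover have "bdd_below S" by (auto simp: S_def bdd_below_def)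
  ultimately have "Inf S \<in> S" using closed unfolding S_def by (rule closed_contains_Inf)
  moreover have "\<not> P s" if "0 < s" "s < Inf S" for s
  proof
    assume "P s"
    hence "s \<in> S" if "d \<le> s" using \<open>Inf S \<in> S\<close> that \<open>s < Inf S\<close> by (auto simp: S_def)
    hence "Inf S \<le> s" if "d \<le> s" using \<open>bdd_below S\<close> that by (auto intro: cInf_lower)
    thus False using before[OF \<open>0 < s\<close>] \<open>P s\<close> \<open>s < Inf S\<close> by fastforce
  qed
  ultimately show ?thesis using that by (auto simp: S_def)
qed

lemma integral_has_real_derivative_interior:
  fixes k :: "real \<Rightarrow> real"
  assumes ki: "k integrable_on {a..b}" and kc: "continuous_on {a<..b} k" and x: "a < x" "x < b"
  shows "((\<lambda>t. integral {a..t} k) has_real_derivative k x) (at x)"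
proof -
  have "isCont k x" using continuous_on_interior[OF kc] x by simp
  hence "continuous (at x within ({a..b} - {})) k" by (rule continuous_at_imp_continuous_at_within)
  from integral_has_vector_derivative_continuous_at[OF ki _ _ this] x
  have "((\<lambda>t. integral {a..t} k) has_vector_derivative k x) (at x within {a..b})" by simp
  thus ?thesis using x by (simp add: at_within_Icc_at has_real_derivative_iff_has_vector_derivative)
qed

lemma integral_from_has_real_derivative:
  fixes k :: "real \<Rightarrow> real"
  assumes "continuous_on {a..b} k" "a < x" "x < b"
  shows "((\<lambda>t. integral {a..t} k) has_real_derivative k x) (at x)"
  using integral_has_real_derivative[OF assms(1), of x] assms by (simp add: at_within_Icc_at)

lemma integral_from_continuous_on:
  fixes k :: "real \<Rightarrow> real"
  assumes "continuous_on UNIV k"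
  shows "continuous_on {a..b} (\<lambda>t. integral {a..t} k)"
  using assms
  by (intro indefinite_integral_continuous_1 integrable_continuous_real) (auto intro: continuous_on_subset)

lemma integral_from_diff:
  fixes k :: "real \<Rightarrow> real"
  assumes "continuous_on UNIV k" "a \<le> s" "s \<le> t"
  shows "integral {s..t} k = integral {a..t} k - integral {a..s} k"
proof -
  have "k integrable_on {a..t}"
    using assms by (intro integrable_continuous_real) (auto intro: continuous_on_subset)
  from Henstock_Kurzweil_Integration.integral_combine[OF assms(2,3) this] show ?thesis by simp
qed

lemma integral_from_nonneg:
  fixes k :: "real \<Rightarrow> real"
  assumes "continuous_on UNIV k" "\<And>x. 0 \<le> k x"
  shows "0 \<le> integral {a..t} k"
  using assms
  by (cases "a \<le> t") (auto intro!: integral_nonneg integrable_continuous_real intro: continuous_on_subset)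

lemma integral_from_mono:
  fixes k :: "real \<Rightarrow> real"
  assumes "continuous_on UNIV k" "\<And>x. 0 \<le> k x" "a \<le> s" "s \<le> t"
  shows "integral {a..s} k \<le> integral {a..t} k"
  using assms
  by (intro integral_subset_le integrable_continuous_real) (auto intro: continuous_on_subset)

lemma integral_from_ge_of_mono:
  fixes k :: "real \<Rightarrow> real"
  assumes "continuous_on UNIV k" "mono k" "a \<le> t"
  shows "k a * (t - a) \<le> integral {a..t} k"
proof -
  have "integral {a..t} (\<lambda>x. k a) \<le> integral {a..t} k"
    using assms
    by (intro integral_le integrable_continuous_real) (auto intro: continuous_on_subset simp: mono_def)
  thus ?thesis using assms by (simp add: mult.commute)
qed

lemma integrable_inv_sqrt:
  fixes a b :: real assumes "a \<le> b"
  shows "(\<lambda>t. 1 / sqrt (t - a)) integrable_on {a..b}"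
proof -
  have "((\<lambda>t. 1 / sqrt (t - a)) has_integral (2 * sqrt (b - a) - 2 * sqrt (a - a))) {a..b}"
  proof (rule fundamental_theorem_of_calculus_interior[OF assms])
    show "continuous_on {a..b} (\<lambda>t. 2 * sqrt (t - a))" by (intro continuous_intros)
    fix x assume x: "x \<in> {a<..<b}"
    show "((\<lambda>t. 2 * sqrt (t - a)) has_vector_derivative 1 / sqrt (x - a)) (at x)"
      unfolding has_real_derivative_iff_has_vector_derivative[symmetric]
      using x by (auto intro!: derivative_eq_intros simp: field_simps)
  qed
  thus ?thesis by blast
qed

lemma integrable_if_bounded_by_inv_sqrt:
  fixes k :: "real \<Rightarrow> real"
  assumes ab: "a \<le> b" and kc: "continuous_on {a<..b} k"
    and kb: "\<And>t. a < t \<Longrightarrow> t \<le> b \<Longrightarrow> 0 \<le> k t \<and> k t \<le> B / sqrt (t - a)"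
  shows "k integrable_on {a..b}"
proof -
  have "k integrable_on {a<..<b}"
  proof (rule measurable_bounded_by_integrable_imp_integrable_real)
    show "k \<in> borel_measurable (lebesgue_on {a<..<b})"
      by (rule continuous_imp_measurable_on_sets_lebesgue) (auto intro: continuous_on_subset[OF kc])
    have "(\<lambda>t. B * (1 / sqrt (t - a))) integrable_on {a..b}"
      using integrable_cmul[OF integrable_inv_sqrt[OF ab], of B] by simp
    thus "(\<lambda>t. B / sqrt (t - a)) integrable_on {a<..<b}"
      by (simp add: integrable_on_Icc_iff_Ioo[symmetric])
    show "\<bar>k x\<bar> \<le> B / sqrt (x - a)" if "x \<in> {a<..<b}" for x
      using kb[of x] that by auto
  qed auto
  thus ?thesis by (simp add: integrable_on_Icc_iff_Ioo)
qed

text \<open>Substitution \<open>t = \<phi> s\<close>: the integral of \<open>k\<close> over the range of an increasing \<open>\<phi>\<close> is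
  the integral of \<open>k (\<phi> s) * \<phi>' s\<close> over \<open>[0, r1]\<close>, so pointwise bounds on the latter integrate.\<close>

lemma integral_range_comp_has_real_derivative:
  fixes \<phi> p k :: "real \<Rightarrow> real"
  assumes r1: "0 < r1" and phic: "continuous_on {0..r1} \<phi>" and phi0: "\<phi> 0 = a"
    and phid: "\<And>s. 0 < s \<Longrightarrow> s < r1 \<Longrightarrow> (\<phi> has_real_derivative p s) (at s)"
    and phir: "\<And>s. 0 < s \<Longrightarrow> s < r1 \<Longrightarrow> a < \<phi> s \<and> \<phi> s < \<phi> r1"
    and kc: "continuous_on {a<..\<phi> r1} k" and ki: "k integrable_on {a..\<phi> r1}"
  shows "continuous_on {0..r1} (\<lambda>s. integral {a..\<phi> s} k)"
    and "\<forall>s\<in>{0<..<r1}. ((\<lambda>s. integral {a..\<phi> s} k) has_real_derivative k (\<phi> s) * p s) (at s)"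
proof -
  have img: "\<phi> ` {0..r1} \<subseteq> {a..\<phi> r1}"
  proof
    fix y assume "y \<in> \<phi> ` {0..r1}"
    then obtain s where s: "s \<in> {0..r1}" "y = \<phi> s" by auto
    show "y \<in> {a..\<phi> r1}"
      using s phir[of s] phir[of "r1/2"] phi0 r1 by (cases "s = 0"; cases "s = r1") auto
  qed
  show "continuous_on {0..r1} (\<lambda>s. integral {a..\<phi> s} k)"
    by (rule continuous_on_compose2[OF indefinite_integral_continuous_1[OF ki] phic img])
  show "\<forall>s\<in>{0<..<r1}. ((\<lambda>s. integral {a..\<phi> s} k) has_real_derivative k (\<phi> s) * p s) (at s)"
  proof
    fix s assume "s \<in> {0<..<r1}"
    hence s: "0 < s" "s < r1" by auto
    have "((\<lambda>t. integral {a..t} k) has_real_derivative k (\<phi> s)) (at (\<phi> s))"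
      using integral_has_real_derivative_interior[OF ki kc] phir[OF s] by simp
    from DERIV_chain2[OF this phid[OF s]]
    show "((\<lambda>s. integral {a..\<phi> s} k) has_real_derivative k (\<phi> s) * p s) (at s)" .
  qed
qed

lemma integral_range_le:
  fixes \<phi> p k :: "real \<Rightarrow> real"
  assumes r1: "0 < r1" and phic: "continuous_on {0..r1} \<phi>" and phi0: "\<phi> 0 = a"
    and phid: "\<And>s. 0 < s \<Longrightarrow> s < r1 \<Longrightarrow> (\<phi> has_real_derivative p s) (at s)"
    and phir: "\<And>s. 0 < s \<Longrightarrow> s < r1 \<Longrightarrow> a < \<phi> s \<and> \<phi> s < \<phi> r1"
    and kc: "continuous_on {a<..\<phi> r1} k"
    and bnd: "\<And>s. 0 < s \<Longrightarrow> s < r1 \<Longrightarrow> p s * k (\<phi> s) \<le> M"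
    and M: "0 \<le> M"
  shows "integral {a..\<phi> r1} k \<le> M * r1"
proof (cases "k integrable_on {a..\<phi> r1}")
  case False
  thus ?thesis using M r1 by (simp add: not_integrable_integral)
next
  case ki: True
  note I = integral_range_comp_has_real_derivative[OF r1 phic phi0 phid phir kc ki]
  have "integral {a..\<phi> r1} k - M * r1 \<le> 0"
  proof (rule nonpos_if_deriv_nonpos_where_pos[where D="\<lambda>s. integral {a..\<phi> s} k - M * s"])
    show "continuous_on {0..r1} (\<lambda>s. integral {a..\<phi> s} k - M * s)"
      by (intro continuous_intros I(1))
    show "((\<lambda>s. integral {a..\<phi> s} k - M * s) has_real_derivative k (\<phi> s) * p s - M) (at s)"
      if "0 < s" "s < r1" for s using I(2) that by (auto intro!: derivative_eq_intros)
  qed (use r1 phi0 bnd in \<open>auto simp: mult.commute\<close>)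
  thus ?thesis by simp
qed

lemma integral_range_ge:
  fixes \<phi> p k :: "real \<Rightarrow> real"
  assumes r1: "0 < r1" and phic: "continuous_on {0..r1} \<phi>" and phi0: "\<phi> 0 = a"
    and phid: "\<And>s. 0 < s \<Longrightarrow> s < r1 \<Longrightarrow> (\<phi> has_real_derivative p s) (at s)"
    and phir: "\<And>s. 0 < s \<Longrightarrow> s < r1 \<Longrightarrow> a < \<phi> s \<and> \<phi> s < \<phi> r1"
    and kc: "continuous_on {a<..\<phi> r1} k" and ki: "k integrable_on {a..\<phi> r1}"
    and bnd: "\<And>s. 0 < s \<Longrightarrow> s < r1 \<Longrightarrow> m \<le> p s * k (\<phi> s)"
  shows "m * r1 \<le> integral {a..\<phi> r1} k"
proof -
  note I = integral_range_comp_has_real_derivative[OF r1 phic phi0 phid phir kc ki]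
  have "m * r1 - integral {a..\<phi> r1} k \<le> 0"
  proof (rule nonpos_if_deriv_nonpos_where_pos[where D="\<lambda>s. m * s - integral {a..\<phi> s} k"])
    show "continuous_on {0..r1} (\<lambda>s. m * s - integral {a..\<phi> s} k)"
      by (intro continuous_intros I(1))
    show "((\<lambda>s. m * s - integral {a..\<phi> s} k) has_real_derivative m - k (\<phi> s) * p s) (at s)"
      if "0 < s" "s < r1" for s using I(2) that by (auto intro!: derivative_eq_intros)
  qed (use r1 phi0 bnd in \<open>auto simp: mult.commute\<close>)
  thus ?thesis by simp
qed

lemma oint_eq_integral_cong:
  "a \<le> b \<Longrightarrow> (\<And>t. a \<le> t \<Longrightarrow> t \<le> b \<Longrightarrow> k t = k' t) \<Longrightarrow> oint a b k = integral {a..b} k'"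
  by (auto simp: oint_def intro!: integral_cong)

section \<open>Exponentially weighted primitives\<close>

definition exp_weighted_integral ::
  "real \<Rightarrow> real \<Rightarrow> (real \<Rightarrow> real) \<Rightarrow> (real \<Rightarrow> real) \<Rightarrow> real \<Rightarrow> real" where
  "exp_weighted_integral a \<kappa> w h t = integral {a..t} (\<lambda>s. exp (\<kappa> * integral {s..t} w) * h s)"

lemma oint_exp_weighted:
  "a \<le> t \<Longrightarrow> oint a t (\<lambda>s. exp (\<kappa> * oint s t w) * h s) = exp_weighted_integral a \<kappa> w h t"
  by (auto simp: oint_def exp_weighted_integral_def intro!: integral_cong)

lemma exp_weighted_integral_at_start [simp]: "exp_weighted_integral a \<kappa> w h a = 0"
  by (simp add: exp_weighted_integral_def)

lemma exp_weighted_integral_zero_rate: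
  "exp_weighted_integral a 0 w h t = integral {a..t} h"
  by (simp add: exp_weighted_integral_def)

context
  fixes a \<kappa> :: real and w h :: "real \<Rightarrow> real"
  assumes w: "continuous_on UNIV w" and h: "continuous_on UNIV h"
begin

lemma exp_weighted_integral_factor:
  "exp_weighted_integral a \<kappa> w h t =
    exp (\<kappa> * integral {a..t} w) * integral {a..t} (\<lambda>s. exp (- \<kappa> * integral {a..s} w) * h s)"
proof -
  have "exp_weighted_integral a \<kappa> w h t =
      integral {a..t} (\<lambda>s. exp (\<kappa> * integral {a..t} w) * (exp (- \<kappa> * integral {a..s} w) * h s))"
    unfolding exp_weighted_integral_def
  proof (rule integral_cong)
    fix s assume "s \<in> {a..t}"
    hence "integral {s..t} w = integral {a..t} w - integral {a..s} w"
      using integral_from_diff[OF w] by simp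
    hence "exp (\<kappa> * integral {s..t} w) = exp (\<kappa> * integral {a..t} w) * exp (- \<kappa> * integral {a..s} w)"
      by (simp add: exp_add[symmetric] right_diff_distrib)
    thus "exp (\<kappa> * integral {s..t} w) * h s =
        exp (\<kappa> * integral {a..t} w) * (exp (- \<kappa> * integral {a..s} w) * h s)"
      by simp
  qed
  thus ?thesis by simp
qed

lemma exp_weight_continuous_on:
  "continuous_on {a..b} (\<lambda>s. exp (- \<kappa> * integral {a..s} w) * h s)"
  by (intro continuous_intros integral_from_continuous_on[OF w] continuous_on_subset[OF h]) auto

lemma exp_weighted_integral_continuous_on:
  "continuous_on {a..b} (exp_weighted_integral a \<kappa> w h)"
  unfolding exp_weighted_integral_factor
  by (intro continuous_intros integral_from_continuous_on[OF w]
      indefinite_integral_continuous_1 integrable_continuous_real exp_weight_continuous_on)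

lemma exp_weighted_integral_has_real_derivative:
  assumes "a < t"
  shows "(exp_weighted_integral a \<kappa> w h has_real_derivative
           h t + \<kappa> * w t * exp_weighted_integral a \<kappa> w h t) (at t)"
proof -
  have dW: "((\<lambda>t. integral {a..t} w) has_real_derivative w t) (at t)"
    by (rule integral_from_has_real_derivative[where b="t + 1"])
       (use assms in \<open>auto intro: continuous_on_subset[OF w]\<close>)
  have dE: "((\<lambda>t. integral {a..t} (\<lambda>s. exp (- \<kappa> * integral {a..s} w) * h s)) has_real_derivative
      exp (- \<kappa> * integral {a..t} w) * h t) (at t)"
    by (rule integral_from_has_real_derivative[OF exp_weight_continuous_on[of "t + 1"]]) (use assms in auto)
  have "exp (\<kappa> * integral {a..t} w) * exp (- \<kappa> * integral {a..t} w) = 1"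
    by (simp add: exp_add[symmetric])
  with DERIV_mult[OF DERIV_chain2[OF DERIV_exp DERIV_cmult[OF dW, of \<kappa>]] dE]
  show ?thesis
    unfolding exp_weighted_integral_factor[abs_def] exp_weighted_integral_factor
    by (simp add: algebra_simps)
qed

end

lemma exp_weighted_integral_lower:
  assumes w: "continuous_on UNIV w" "\<And>x. 0 \<le> w x" and h: "continuous_on UNIV h" "mono h" "0 \<le> h a"
    and t: "a \<le> t"
  shows "exp (- \<bar>\<kappa>\<bar> * integral {a..t} w) * h a * (t - a) \<le> exp_weighted_integral a \<kappa> w h t"
proof -
  have "integral {a..t} (\<lambda>s. exp (- \<bar>\<kappa>\<bar> * integral {a..t} w) * h a)
      \<le> integral {a..t} (\<lambda>s. exp (\<kappa> * integral {s..t} w) * h s)"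
  proof (rule integral_le)
    show "(\<lambda>s. exp (\<kappa> * integral {s..t} w) * h s) integrable_on {a..t}"
    proof (rule integrable_eq)
      show "(\<lambda>s. exp (\<kappa> * integral {a..t} w) * (exp (- \<kappa> * integral {a..s} w) * h s)) integrable_on {a..t}"
        by (intro integrable_continuous_real continuous_on_mult[OF continuous_on_const]
            exp_weight_continuous_on w h)
      show "exp (\<kappa> * integral {a..t} w) * (exp (- \<kappa> * integral {a..s} w) * h s) =
          exp (\<kappa> * integral {s..t} w) * h s" if "s \<in> {a..t}" for s
        using that integral_from_diff[OF w(1), of a s t] by (simp add: exp_add[symmetric] right_diff_distrib)
    qed
    fix s assume s: "s \<in> {a..t}"
    have "0 \<le> integral {s..t} w" using w s by (intro integral_from_nonneg) auto
    moreover have "integral {s..t} w \<le> integral {a..t} w"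
      using s w integral_from_diff[OF w(1), of a s t] integral_from_nonneg[OF w, of a s] by simp
    ultimately have "\<bar>\<kappa> * integral {s..t} w\<bar> \<le> \<bar>\<kappa>\<bar> * integral {a..t} w"
      by (simp add: abs_mult mult_left_mono)
    hence "- \<bar>\<kappa>\<bar> * integral {a..t} w \<le> \<kappa> * integral {s..t} w"
      by linarith
    moreover have "h a \<le> h s" using h(2) s by (auto simp: mono_def)
    ultimately show "exp (- \<bar>\<kappa>\<bar> * integral {a..t} w) * h a \<le> exp (\<kappa> * integral {s..t} w) * h s"
      using h(3) by (intro mult_mono) auto
  qed (simp add: integrable_on_const)
  thus ?thesis using t by (simp add: exp_weighted_integral_def mult_ac)
qed

lemma exp_weighted_integral_pos:
  assumes "continuous_on UNIV w" "\<And>x. 0 \<le> w x" "continuous_on UNIV h" "mono h" "0 < h a" "a < t"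
  shows "0 < exp_weighted_integral a \<kappa> w h t"
proof -
  have "0 < exp (- \<bar>\<kappa>\<bar> * integral {a..t} w) * h a * (t - a)" using assms by simp
  also have "\<dots> \<le> exp_weighted_integral a \<kappa> w h t"
    using assms by (intro exp_weighted_integral_lower) auto
  finally show ?thesis .
qed

lemma integral_mult_exp_integral_from:
  fixes w :: "real \<Rightarrow> real"
  assumes w: "continuous_on UNIV w" and \<kappa>: "\<kappa> \<noteq> 0" and t: "a \<le> t"
  shows "integral {a..t} (\<lambda>s. w s * exp (\<kappa> * integral {a..s} w)) = (exp (\<kappa> * integral {a..t} w) - 1) / \<kappa>"
proof -
  have "((\<lambda>s. w s * exp (\<kappa> * integral {a..s} w)) has_integral
      (exp (\<kappa> * integral {a..t} w) / \<kappa> - exp (\<kappa> * integral {a..a} w) / \<kappa>)) {a..t}"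
  proof (rule fundamental_theorem_of_calculus[OF t])
    fix x assume x: "x \<in> {a..t}"
    have "((\<lambda>s. integral {a..s} w) has_real_derivative w x) (at x within {a..t})"
      by (rule integral_has_real_derivative[OF continuous_on_subset[OF w] x]) auto
    hence "((\<lambda>s. exp (\<kappa> * integral {a..s} w) / \<kappa>) has_real_derivative
        exp (\<kappa> * integral {a..x} w) * (\<kappa> * w x) / \<kappa>) (at x within {a..t})"
      by (auto intro!: derivative_eq_intros)
    thus "((\<lambda>s. exp (\<kappa> * integral {a..s} w) / \<kappa>) has_vector_derivative
        w x * exp (\<kappa> * integral {a..x} w)) (at x within {a..t})"
      using \<kappa> by (simp add: has_real_derivative_iff_has_vector_derivative[symmetric] mult_ac)
  qed
  thus ?thesis by (simp add: integral_unique diff_divide_distrib)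
qed

text \<open>With \<open>e(s) = exp (- \<kappa> \<integral>\<^sub>s\<^sup>t w)\<close> and \<open>w\<close> antitone,
  \<open>\<kappa> w(t) \<integral>\<^sub>a\<^sup>t e \<le> \<integral>\<^sub>a\<^sup>t \<kappa> w e = 1 - e(a) \<le> 1\<close>.\<close>

lemma exp_weighted_integral_decay_bound:
  assumes w: "continuous_on UNIV w" "\<And>x. 0 \<le> w x" "antimono w"
    and h: "continuous_on UNIV h" "mono h" "0 \<le> h a"
    and \<kappa>: "0 < \<kappa>" and t: "a \<le> t"
  shows "\<kappa> * w t * exp_weighted_integral a (- \<kappa>) w h t \<le> h t"
proof -
  define W where "W s = integral {a..s} w" for s
  have Wc: "continuous_on {a..t} W" unfolding W_def by (rule integral_from_continuous_on[OF w(1)])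
  have ht: "0 \<le> h t" using h(2,3) t by (auto simp: mono_def intro: order.trans)
  define J where "J = integral {a..t} (\<lambda>s. exp (\<kappa> * W s))"
  have "integral {a..t} (\<lambda>s. exp (\<kappa> * W s) * h s) \<le> integral {a..t} (\<lambda>s. h t * exp (\<kappa> * W s))"
  proof (rule integral_le)
    show "(\<lambda>s. exp (\<kappa> * W s) * h s) integrable_on {a..t}"
      by (intro integrable_continuous_real continuous_intros Wc continuous_on_subset[OF h(1)]) auto
    show "(\<lambda>s. h t * exp (\<kappa> * W s)) integrable_on {a..t}"
      by (intro integrable_continuous_real continuous_intros Wc)
    show "exp (\<kappa> * W s) * h s \<le> h t * exp (\<kappa> * W s)" if "s \<in> {a..t}" for s
      using h(2) that by (auto simp: mono_def mult.commute)
  qed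
  hence E_le: "integral {a..t} (\<lambda>s. exp (\<kappa> * W s) * h s) \<le> h t * J" by (simp add: J_def)
  have "integral {a..t} (\<lambda>s. w t * exp (\<kappa> * W s)) \<le> integral {a..t} (\<lambda>s. w s * exp (\<kappa> * W s))"
  proof (rule integral_le)
    show "(\<lambda>s. w t * exp (\<kappa> * W s)) integrable_on {a..t}"
      by (intro integrable_continuous_real continuous_intros Wc)
    show "(\<lambda>s. w s * exp (\<kappa> * W s)) integrable_on {a..t}"
      by (intro integrable_continuous_real continuous_intros Wc continuous_on_subset[OF w(1)]) auto
    show "w t * exp (\<kappa> * W s) \<le> w s * exp (\<kappa> * W s)" if "s \<in> {a..t}" for s
      using w(3) that by (auto simp: antimono_def)
  qed
  hence "w t * J \<le> (exp (\<kappa> * W t) - 1) / \<kappa>"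
    using integral_mult_exp_integral_from[OF w(1) _ t, of \<kappa>] \<kappa> by (simp add: J_def W_def)
  hence wJ: "\<kappa> * w t * J \<le> exp (\<kappa> * W t) - 1" using \<kappa> by (simp add: field_simps)
  have "\<kappa> * w t * exp_weighted_integral a (- \<kappa>) w h t
      = exp (- \<kappa> * W t) * (\<kappa> * w t * integral {a..t} (\<lambda>s. exp (\<kappa> * W s) * h s))"
    by (simp add: exp_weighted_integral_factor[OF w(1) h(1)] W_def)
  also have "\<dots> \<le> exp (- \<kappa> * W t) * (\<kappa> * w t * (h t * J))"
    using E_le \<kappa> w(2)[of t] by (intro mult_left_mono) auto
  also have "\<dots> = exp (- \<kappa> * W t) * (h t * (\<kappa> * w t * J))" by (simp add: mult_ac)
  also have "\<dots> \<le> exp (- \<kappa> * W t) * (h t * (exp (\<kappa> * W t) - 1))"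
    using wJ ht by (simp add: mult_left_mono)
  also have "\<dots> = h t * (1 - exp (- \<kappa> * W t))"
    by (simp add: algebra_simps exp_add[symmetric])
  also have "\<dots> \<le> h t" using ht by (simp add: mult_left_le)
  finally show ?thesis .
qed

lemma le_scaled_sqrt_add_root_if_sq_le:
  fixes M A B q :: real
  assumes M: "0 < M" and A: "0 \<le> A" and B: "0 \<le> B" and q: "0 < q" "q < 2"
    and ineq: "M^2 \<le> 2 * A + 2 * M powr q * B"
  shows "M \<le> 2 powr (2 / (2 - q)) * (sqrt A + B powr (1 / (2 - q)))"
proof -
  have one: "1 \<le> 2 / (2 - q)" using q by (simp add: field_simps)
  have two: "2 \<le> 2 powr (2 / (2 - q))"
    using powr_mono[OF one, of 2] by simp
  show ?thesis
  proof (cases "M powr q * B \<le> A")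
    case True
    hence "M^2 \<le> 4 * A" using ineq by simp
    hence "M \<le> sqrt (4 * A)" using M by (metis abs_of_pos real_le_rsqrt)
    also have "\<dots> = 2 * sqrt A" by (simp add: real_sqrt_mult)
    also have "\<dots> \<le> 2 powr (2 / (2 - q)) * sqrt A" using two A by (intro mult_right_mono) auto
    also have "\<dots> \<le> 2 powr (2 / (2 - q)) * (sqrt A + B powr (1 / (2 - q)))" by (intro mult_left_mono) auto
    finally show ?thesis .
  next
    case False
    have eq4: "4 powr (1 / (2 - q)) = 2 powr (2 / (2 - q))"
    proof -
      have "((2::real) powr 2) powr (1 / (2 - q)) = 2 powr (2 * (1 / (2 - q)))" by (rule powr_powr)
      moreover have "(2::real) powr 2 = 4" by simp
      ultimately show ?thesis by simp
    qed
    have "M^2 < 4 * (M powr q * B)" using ineq False by simp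
    moreover have "M^2 = M powr q * M powr (2 - q)"
    proof -
      have "M powr q * M powr (2 - q) = M powr (q + (2 - q))" by (rule powr_add[symmetric])
      also have "\<dots> = M powr 2" by simp
      also have "\<dots> = M^2" using M by (simp add: powr_numeral)
      finally show ?thesis by simp
    qed
    ultimately have "M powr q * M powr (2 - q) < M powr q * (4 * B)" by simp
    hence lt: "M powr (2 - q) < 4 * B" using M by (simp add: mult_less_cancel_left_pos)
    have "(M powr (2 - q)) powr (1 / (2 - q)) = M powr ((2 - q) * (1 / (2 - q)))" by (rule powr_powr)
    also have "(2 - q) * (1 / (2 - q)) = 1" using q by simp
    finally have "M = (M powr (2 - q)) powr (1 / (2 - q))" using M by simp
    also have "\<dots> \<le> (4 * B) powr (1 / (2 - q))" using lt q by (intro powr_mono2) auto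
    also have "\<dots> = 4 powr (1 / (2 - q)) * B powr (1 / (2 - q))"
      using B by (simp add: powr_mult)
    also have "\<dots> = 2 powr (2 / (2 - q)) * B powr (1 / (2 - q))" using eq4 by simp
    also have "\<dots> \<le> 2 powr (2 / (2 - q)) * (sqrt A + B powr (1 / (2 - q)))" using A by (intro mult_left_mono) auto
    finally show ?thesis .
  qed
qed

lemma ln_div_self_le_ln2_div_2:
  fixes y :: real assumes y: "0 < y" "y \<le> 2"
  shows "ln y / y \<le> ln 2 / 2"
proof (rule DERIV_nonneg_imp_increasing_open[OF y(2), where f="\<lambda>x. ln x / x"])
  fix x :: real assume x: "y < x" "x < 2"
  have xp: "0 < x" using x y by simp
  have "ln x \<le> ln 2" using x xp by simp
  hence "ln x < 1" using ln_2_less_1 by simp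
  hence "0 \<le> (1 - ln x) / x^2" using xp by simp
  moreover have "((\<lambda>x. ln x / x) has_real_derivative (1 - ln x) / x^2) (at x)"
    using xp by (auto intro!: derivative_eq_intros simp: field_simps power2_eq_square)
  ultimately show "\<exists>d. ((\<lambda>x. ln x / x) has_real_derivative d) (at x) \<and> 0 \<le> d" by blast
next
  show "continuous_on {y..2} (\<lambda>x. ln x / x)" using y by (intro continuous_intros) auto
qed

lemma scaled_root_le_sqrt:
  fixes q c :: real assumes q: "0 < q" "q < 2" and c: "1 \<le> c"
  shows "((2 - q) / c) powr (1 / (2 - q)) \<le> sqrt (2 / c)"
proof -
  define y where "y = 2 - q"
  have y: "0 < y" "y \<le> 2" using q by (auto simp: y_def)
  have "y powr (1 / y) = exp (ln y / y)" using y by (simp add: powr_def)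
  also have "\<dots> \<le> exp (ln 2 / 2)" using ln_div_self_le_ln2_div_2[OF y] by simp
  also have "\<dots> = sqrt 2" by (simp add: powr_def[symmetric] powr_half_sqrt[symmetric] powr_def)
  finally have A: "y powr (1 / y) \<le> sqrt 2" .
  have "1/2 \<le> 1 / y" using y by (simp add: field_simps)
  hence B: "c powr (1/2) \<le> c powr (1 / y)" using c by (intro powr_mono) auto
  have cp: "0 < c powr (1/2)" using c by simp
  have "((2 - q) / c) powr (1 / (2 - q)) = y powr (1 / y) / c powr (1 / y)"
    by (simp add: y_def powr_divide)
  also have "\<dots> \<le> sqrt 2 / c powr (1/2)"
    using A B cp y by (intro frac_le) auto
  also have "\<dots> = sqrt (2 / c)" using c by (simp add: powr_half_sqrt real_sqrt_divide)
  finally show ?thesis .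
qed

lemma scaled_powr_le_two_div:
  fixes q c :: real assumes "0 < q" "q \<le> 2" "1 \<le> c"
  shows "q * c powr (-2/q) \<le> 2 / c"
proof -
  have "c powr (-2/q) \<le> c powr (-1)" using assms by (intro powr_mono) (auto simp: field_simps)
  hence "c powr (-2/q) \<le> 1 / c" using assms by (simp add: powr_minus_divide)
  hence "q * c powr (-2/q) \<le> 2 * (1 / c)" using assms by (intro mult_mono) auto
  thus ?thesis by simp
qed

lemma powr_half_square: assumes "0 < x" shows "(x\<^sup>2) powr (q / 2) = (x :: real) powr q"
proof -
  have "(x\<^sup>2) powr (q / 2) = (x powr 2) powr (q / 2)" using assms by (simp add: powr_numeral)
  also have "\<dots> = x powr q" by (simp add: powr_powr)
  finally show ?thesis .
qed

lemma young_powr_half_split: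
  fixes q c gm F w :: real
  assumes q: "0 < q" "q \<le> 2" and c: "1 \<le> c" and gm: "0 \<le> gm" and F: "0 < F" and w: "0 \<le> w"
  shows "gm * w powr (q/2) \<le> (q/2) * c powr (2/q - 1) * ((gm / F) powr (2/q) * F) * w + ((2-q)/(2*c)) * F"
proof (cases "gm = 0 \<or> w = 0")
  case True
  have "0 \<le> (q/2) * c powr (2/q - 1) * ((gm / F) powr (2/q) * F) * w" using q gm F w by simp
  moreover have "0 \<le> ((2-q)/(2*c)) * F" using q c F by simp
  ultimately show ?thesis using True by auto
next
  case False
  hence gp: "0 < gm" and wp: "0 < w" using gm w by auto
  define A where "A = c powr (2/q - 1) * ((gm / F) powr (2/q) * F) * w"
  define B where "B = F / c"
  have Ap: "0 < A" using gp wp F c by (simp add: A_def)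
  have Bp: "0 < B" using F c by (simp add: B_def)
  have Y: "A powr (q/2) * B powr (1 - q/2) \<le> (q/2) * A + (1 - q/2) * B"
    by (rule Youngs_inequality_0) (use q Ap Bp in auto)
  have "ln (A powr (q/2) * B powr (1 - q/2)) = ln (gm * w powr (q/2))"
  proof -
    have lA: "ln A = (2/q - 1) * ln c + (2/q) * (ln gm - ln F) + ln F + ln w"
      using gp wp F c by (simp add: A_def ln_mult ln_div)
    have lB: "ln B = ln F - ln c" using F c by (simp add: B_def ln_div)
    have "ln (A powr (q/2) * B powr (1 - q/2)) = (q/2) * ln A + (1 - q/2) * ln B"
      using Ap Bp by (simp add: ln_mult)
    also have "\<dots> = ln gm + (q/2) * ln w"
      unfolding lA lB using q by (simp add: field_simps)
    also have "\<dots> = ln (gm * w powr (q/2))" using gp wp by (simp add: ln_mult)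
    finally show ?thesis .
  qed
  hence "A powr (q/2) * B powr (1 - q/2) = gm * w powr (q/2)"
    using Ap Bp gp wp by (subst (asm) ln_inj_iff) auto
  with Y have "gm * w powr (q/2) \<le> (q/2) * A + (1 - q/2) * B" by simp
  also have "\<dots> = (q/2) * c powr (2/q - 1) * ((gm / F) powr (2/q) * F) * w + ((2-q)/(2*c)) * F"
    by (simp add: A_def B_def field_simps)
  finally show ?thesis .
qed

lemma le_powr_half_if_weighted_le:
  fixes q gm F x w :: real
  assumes q: "0 < q" "q \<le> 2" and gm: "0 \<le> gm" and F: "0 < F" and x: "0 \<le> x" and xw: "x \<le> w"
    and hx: "(gm / F) powr (2/q) * F * x \<le> F"
  shows "(gm / F) powr (2/q) * F * x \<le> gm * w powr (q/2)"
proof (cases "gm = 0 \<or> x = 0")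
  case True thus ?thesis using gm by auto
next
  case False
  hence gp: "0 < gm" and xp: "0 < x" using gm x by auto
  define z where "z = gm * x powr (q/2) / F"
  have zp: "0 < z" using gp xp F by (simp add: z_def)
  have eq: "(gm / F) powr (2/q) * F * x = F * z powr (2/q)"
  proof -
    have "z powr (2/q) = (gm / F) powr (2/q) * (x powr (q/2)) powr (2/q)"
      unfolding z_def using gp xp F by (simp add: powr_mult[symmetric] powr_divide)
    also have "(x powr (q/2)) powr (2/q) = x" using q xp by (simp add: powr_powr)
    finally show ?thesis by simp
  qed
  have "z powr (2/q) \<le> 1" using hx eq F by simp
  hence z1: "z \<le> 1"
  proof -
    assume "z powr (2/q) \<le> 1"
    hence "(z powr (2/q)) powr (q/2) \<le> 1 powr (q/2)" using q zp by (intro powr_mono2) auto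
    thus "z \<le> 1" using q zp by (simp add: powr_powr)
  qed
  have "z powr (2/q) \<le> z powr 1" using z1 zp q by (intro powr_mono') (auto simp: field_simps)
  hence "F * z powr (2/q) \<le> F * z" using F zp by simp
  also have "F * z = gm * x powr (q/2)" using F by (simp add: z_def)
  also have "\<dots> \<le> gm * w powr (q/2)" using gm x xw q by (intro mult_left_mono powr_mono2) auto
  finally show ?thesis unfolding eq .
qed

lemma barrier_coefficient_nonneg:
  fixes q c F X :: real
  assumes q: "0 < q" "q \<le> 2" and c: "1 \<le> c" and X: "0 \<le> X" and FX: "2 * X \<le> F"
  shows "0 \<le> (q / c - q * c powr (-2/q)) * F + q * c powr (-2/q) * X * (2 - q * c powr (2/q - 1))"
proof -
  define e where "e = c powr (-2/q)"
  define C where "C = c powr (2/q - 1)"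
  have "C * e = c powr (2/q - 1 + -2/q)" unfolding C_def e_def by (rule powr_add[symmetric])
  also have "\<dots> = 1 / c" using c by (simp add: powr_minus_divide)
  finally have Ce: "C * e = 1 / c" .
  have e: "0 < e" using c by (simp add: e_def)
  have C: "1 \<le> C" unfolding C_def using c q by (intro ge_one_powr_ge_zero) (auto simp: field_simps)
  have "(C - 1) * (2 * X) + X * (2 - q * C) = X * C * (2 - q)" by (simp add: algebra_simps)
  also have "0 \<le> \<dots>" using X C q by simp
  finally have "0 \<le> (C - 1) * F + X * (2 - q * C)"
    using mult_left_mono[OF FX, of "C - 1"] C by linarith
  hence "0 \<le> q * e * ((C - 1) * F + X * (2 - q * C))" using q e by simp
  also have "q * e * ((C - 1) * F + X * (2 - q * C)) = (q * (C * e) - q * e) * F + q * e * X * (2 - q * C)"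
    by (simp add: algebra_simps)
  finally show ?thesis using Ce by (simp add: e_def C_def)
qed

section \<open>Radial solutions\<close>

locale radial_solution =
  fixes q c a R L :: real and f g \<phi> p pp :: "real \<Rightarrow> real"
  assumes q_pos: "0 < q" and q_le_2: "q \<le> 2" and c_ge_1: "1 \<le> c"
    and f_cont: "continuous_on UNIV f" and f_mono: "mono f" and f_pos: "\<And>x. 0 < f x"
    and g_cont: "continuous_on UNIV g" and g_mono: "mono g" and R_pos: "0 < R"
    and phi_cont: "continuous_on {0..<R} \<phi>"
    and phi_deriv: "\<And>r. 0 < r \<Longrightarrow> r < R \<Longrightarrow> (\<phi> has_real_derivative p r) (at r)"
    and p_deriv: "\<And>r. 0 < r \<Longrightarrow> r < R \<Longrightarrow> (p has_real_derivative pp r) (at r)"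
    and pp_cont: "continuous_on {0<..<R} pp"
    and ode: "\<And>r. 0 < r \<Longrightarrow> r < R \<Longrightarrow>
                pp r + (c - 1) / r * p r = f (\<phi> r) + g (\<phi> r) * \<bar>p r\<bar> powr q"
    and phi_0: "\<phi> 0 = a" and p_tendsto_0: "(p \<longlongrightarrow> 0) (at_right 0)"
    and pp_tendsto: "(pp \<longlongrightarrow> L) (at_right 0)"
begin

text \<open>The solution only prescribes \<open>p = \<phi>'\<close> on \<open>(0, R)\<close>; \<open>slope\<close> extends it continuously to \<open>0\<close>.\<close>

definition slope where "slope s = (if s = 0 then 0 else p s)"

lemma slope_eq: "0 < s \<Longrightarrow> slope s = p s"
  by (simp add: slope_def)

lemma slope_has_real_derivative:
  assumes "0 < r" "r < R" shows "(slope has_real_derivative pp r) (at r)"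
proof -
  have "eventually (\<lambda>x. p x = slope x) (nhds r)"
    by (rule eventually_mono[OF eventually_nhds_in_open[of "{0<..}" r]]) (use assms in \<open>auto simp: slope_def\<close>)
  from DERIV_cong_ev[OF refl this refl] p_deriv[OF assms] show ?thesis by simp
qed

lemma slope_continuous_on:
  assumes "0 < r" "r < R" shows "continuous_on {0..r} slope"
proof (rule continuous_on_IccI)
  have "eventually (\<lambda>x. p x = slope x) (at_right 0)"
    by (auto simp: slope_def eventually_at_right_field intro!: exI[of _ 1])
  hence "(slope \<longlongrightarrow> 0) (at_right 0)" using tendsto_cong p_tendsto_0 by blast
  thus "(slope \<longlongrightarrow> slope 0) (at_right 0)" by (simp add: slope_def)
  show "(slope \<longlongrightarrow> slope r) (at_left r)"
    using DERIV_isCont[OF slope_has_real_derivative[OF assms]]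
    unfolding isCont_def filterlim_at_split by simp
  show "slope \<midarrow>x\<rightarrow> slope x" if "0 < x" "x < r" for x
    using DERIV_isCont[OF slope_has_real_derivative[of x]] that assms by (simp add: isCont_def)
qed fact

lemma phi_continuous_on: "r < R \<Longrightarrow> continuous_on {0..r} \<phi>"
  using phi_cont by (rule continuous_on_subset) auto

lemma pp_limit_eq: "L = f a / c"
proof -
  have p_div: "((\<lambda>x. p x / x) \<longlongrightarrow> L) (at_right 0)"
  proof (rule lhopital_right_0[where f'=pp and g'="\<lambda>_. 1"])
    show "eventually (\<lambda>x. DERIV p x :> pp x) (at_right 0)"
      using R_pos p_deriv by (auto simp: eventually_at_right_field intro!: exI[of _ R])
    show "eventually (\<lambda>x. DERIV (\<lambda>x. x) x :> 1) (at_right 0)"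
      by (auto intro!: derivative_eq_intros always_eventually)
    show "eventually (\<lambda>x::real. x \<noteq> 0) (at_right 0)"
      by (rule eventually_mono[OF eventually_at_right_less]) simp
  qed (use p_tendsto_0 pp_tendsto in auto)
  have phi_tendsto: "(\<phi> \<longlongrightarrow> a) (at_right 0)"
    using continuous_on_Icc_at_rightD[OF phi_continuous_on[of "R/2"]] R_pos by (simp add: phi_0)
  have "eventually (\<lambda>x. pp x = f (\<phi> x) + g (\<phi> x) * \<bar>p x\<bar> powr q - (c - 1) * (p x / x)) (at_right 0)"
    using R_pos ode by (auto simp: eventually_at_right_field intro!: exI[of _ R] simp: algebra_simps)
  moreover have "((\<lambda>x. f (\<phi> x) + g (\<phi> x) * \<bar>p x\<bar> powr q - (c - 1) * (p x / x)) \<longlongrightarrow>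
      f a + g a * 0 - (c - 1) * L) (at_right 0)"
  proof (intro tendsto_intros p_div)
    have "isCont f a" "isCont g a" using f_cont g_cont by (auto simp: continuous_on_eq_continuous_at)
    thus "((\<lambda>x. f (\<phi> x)) \<longlongrightarrow> f a) (at_right 0)" "((\<lambda>x. g (\<phi> x)) \<longlongrightarrow> g a) (at_right 0)"
      by (auto intro: isCont_tendsto_compose[OF _ phi_tendsto])
    show "((\<lambda>x. \<bar>p x\<bar> powr q) \<longlongrightarrow> 0) (at_right 0)"
      by (rule tendsto_zero_powrI) (use p_tendsto_0 q_pos in \<open>auto intro: tendsto_rabs_zero\<close>)
  qed
  ultimately have "(pp \<longlongrightarrow> f a - (c - 1) * L) (at_right 0)"
    by (simp add: tendsto_cong)
  from tendsto_unique[OF _ pp_tendsto this] have "L = f a - (c - 1) * L" by simp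
  thus ?thesis using c_ge_1 by (simp add: field_simps)
qed

lemma obtain_pp_pos_near_0:
  obtains d where "0 < d" "d \<le> R" "\<And>s. 0 < s \<Longrightarrow> s < d \<Longrightarrow> 0 < pp s"
proof -
  have "0 < L" using pp_limit_eq f_pos c_ge_1 by simp
  from order_tendstoD(1)[OF pp_tendsto this] obtain b where
    "0 < b" "\<And>y. 0 < y \<Longrightarrow> y < b \<Longrightarrow> 0 < pp y"
    by (auto simp: eventually_at_right_field)
  thus ?thesis using that[of "min b R"] R_pos by auto
qed

lemma obtain_p_pos_near_0:
  obtains d where "0 < d" "d \<le> R" "\<And>s. 0 < s \<Longrightarrow> s < d \<Longrightarrow> 0 < p s"
proof -
  obtain d where d: "0 < d" "d \<le> R" "\<And>s. 0 < s \<Longrightarrow> s < d \<Longrightarrow> 0 < pp s"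
    using obtain_pp_pos_near_0 by blast
  have "0 < p s" if s: "0 < s" "s < d" for s
  proof -
    have "slope 0 < slope s"
    proof (rule DERIV_pos_imp_increasing_open[OF s(1)])
      show "\<exists>y. DERIV slope x :> y \<and> 0 < y" if "0 < x" "x < s" for x
        using slope_has_real_derivative[of x] d(3)[of x] d(2) that s by auto
      show "continuous_on {0..s} slope" using slope_continuous_on s d by simp
    qed
    thus ?thesis using s by (simp add: slope_def)
  qed
  with d(1,2) show ?thesis by (rule that)
qed

text \<open>At a first zero \<open>T\<close> of \<open>p\<close> the equation gives \<open>p' T = f (\<phi> T) > 0\<close>, so \<open>p\<close> would be
  negative just before \<open>T\<close>.\<close>

lemma p_pos: assumes r: "0 < r" "r < R" shows "0 < p r"
proof (rule ccontr)
  assume "\<not> 0 < p r"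
  obtain d where d: "0 < d" "d \<le> R" and near_0: "\<And>s. 0 < s \<Longrightarrow> s < d \<Longrightarrow> 0 < p s"
    using obtain_p_pos_near_0 by blast
  have "closed {s \<in> {d..r}. p s \<le> 0}"
    using DERIV_isCont[OF p_deriv] d r
    by (intro continuous_on_closed_Collect_le continuous_at_imp_continuous_on) auto
  then obtain T where T: "d \<le> T" "T \<le> r" "p T \<le> 0"
    and before: "\<And>s. 0 < s \<Longrightarrow> s < T \<Longrightarrow> \<not> p s \<le> 0"
  proof (rule obtain_first_point[where P="\<lambda>s. p s \<le> 0"])
    show "\<not> p s \<le> 0" if "0 < s" "s < d" for s using near_0[OF that] by simp
  qed (use d r \<open>\<not> 0 < p r\<close> in auto)
  have T0: "0 < T" "T < R" using T d r by auto
  have "0 \<le> p T"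
  proof (rule tendsto_lowerbound)
    show "(p \<longlongrightarrow> p T) (at_left T)"
      using DERIV_isCont[OF p_deriv[OF T0]] by (simp add: isCont_def filterlim_at_split)
    show "eventually (\<lambda>s. 0 \<le> p s) (at_left T)"
      using before T0 by (force simp: eventually_at_left_field intro!: exI[of _ 0])
  qed simp
  hence pT: "p T = 0" using T by simp
  hence "0 < pp T" using ode[OF T0] q_pos f_pos by simp
  from DERIV_pos_inc_left[OF p_deriv[OF T0] this] obtain e where
    e: "0 < e" "\<And>h. 0 < h \<Longrightarrow> h < e \<Longrightarrow> p (T - h) < p T" by auto
  have "p (T - min e T / 2) < 0" using e T0 pT by simp
  moreover have "\<not> p (T - min e T / 2) \<le> 0" using e T0 by (intro before) auto
  ultimately show False by simp
qed

lemma p_abs: "0 < r \<Longrightarrow> r < R \<Longrightarrow> \<bar>p r\<bar> = p r"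
  using p_pos by fastforce

lemma phi_strict_mono: assumes "0 \<le> s" "s < t" "t < R" shows "\<phi> s < \<phi> t"
proof (rule DERIV_pos_imp_increasing_open[OF assms(2)])
  show "\<exists>y. DERIV \<phi> x :> y \<and> 0 < y" if "s < x" "x < t" for x
    using phi_deriv[of x] p_pos[of x] that assms by auto
  show "continuous_on {s..t} \<phi>" using phi_cont by (rule continuous_on_subset) (use assms in auto)
qed

lemma phi_ge_a: "0 \<le> s \<Longrightarrow> s < R \<Longrightarrow> a \<le> \<phi> s"
  using phi_strict_mono[of 0 s] phi_0 by (cases "s = 0") auto

lemma a_less_phi: "0 < r \<Longrightarrow> r < R \<Longrightarrow> a < \<phi> r"
  using phi_strict_mono[of 0 r] phi_0 by simp

lemma phi_between: assumes "0 < u" "u < r" "r < R" shows "a < \<phi> u" "\<phi> u < \<phi> r"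
  using phi_strict_mono[of 0 u] phi_strict_mono[of u r] assms phi_0 by auto

lemma phi_image: "r < R \<Longrightarrow> \<phi> ` {0..r} \<subseteq> {a..\<phi> r}"
  using phi_ge_a phi_strict_mono by (force simp: le_less)

lemma g_phi_mono: "0 \<le> s \<Longrightarrow> s \<le> t \<Longrightarrow> t < R \<Longrightarrow> g (\<phi> s) \<le> g (\<phi> t)"
  using phi_strict_mono[of s t] g_mono by (cases "s = t") (auto simp: mono_def)

lemma f_phi_mono: "0 \<le> s \<Longrightarrow> s \<le> t \<Longrightarrow> t < R \<Longrightarrow> f (\<phi> s) \<le> f (\<phi> t)"
  using phi_strict_mono[of s t] f_mono by (cases "s = t") (auto simp: mono_def)

lemma g_nonneg_if_g_a_nonneg: "0 \<le> g a \<Longrightarrow> 0 < u \<Longrightarrow> u < R \<Longrightarrow> 0 \<le> g (\<phi> u)"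
  using g_phi_mono[of 0 u] phi_0 by simp

lemma integral_f_ge: "a \<le> t \<Longrightarrow> f a * (t - a) \<le> integral {a..t} f"
  by (rule integral_from_ge_of_mono[OF f_cont f_mono])

lemma integral_f_nonneg: "0 \<le> integral {a..t} f"
  using f_pos by (intro integral_from_nonneg[OF f_cont] less_imp_le)

lemma integral_f_pos: "a < t \<Longrightarrow> 0 < integral {a..t} f"
  using integral_f_ge[of t] mult_pos_pos[OF f_pos[of a], of "t - a"] by linarith

definition g_plus where "g_plus s = max (g s) 0"

lemma g_plus_continuous: "continuous_on UNIV g_plus"
  unfolding g_plus_def by (intro continuous_intros g_cont)

lemma g_plus_nonneg: "0 \<le> g_plus s"
  by (simp add: g_plus_def)

lemma g_plus_eq: "(\<lambda>s. max (g s) 0) = g_plus"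
  by (simp add: g_plus_def[abs_def])

definition damping where "damping \<tau> = (max (- g \<tau>) 0 / f \<tau>) powr (2 / q) * f \<tau>"

lemma damping_continuous: "continuous_on UNIV damping"
proof -
  have "continuous_on UNIV (\<lambda>\<tau>. max (- g \<tau>) 0 / f \<tau>)"
    using f_pos by (intro continuous_intros g_cont f_cont) (simp add: less_imp_neq[symmetric])
  hence "continuous_on UNIV (\<lambda>\<tau>. (max (- g \<tau>) 0 / f \<tau>) powr (2 / q))"
    by (rule continuous_on_powr'[OF _ continuous_on_const]) (use f_pos q_pos in \<open>auto simp: less_imp_le\<close>)
  thus ?thesis unfolding damping_def by (rule continuous_on_mult[OF _ f_cont])
qed

lemma damping_nonneg: "0 \<le> damping \<tau>"
  using f_pos[of \<tau>] by (simp add: damping_def)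

lemma damping_antimono: "antimono damping"
proof (rule antimonoI)
  fix s t :: real assume "s \<le> t"
  have "max (- g t) 0 powr (2 / q) \<le> max (- g s) 0 powr (2 / q)"
    using monoD[OF g_mono \<open>s \<le> t\<close>] q_pos by (intro powr_mono2) auto
  moreover have "f t powr (1 - 2 / q) \<le> f s powr (1 - 2 / q)"
    using f_mono \<open>s \<le> t\<close> f_pos q_pos q_le_2
    by (intro powr_mono2') (auto simp: field_simps mono_def less_imp_le)
  moreover have "damping \<tau> = max (- g \<tau>) 0 powr (2 / q) * f \<tau> powr (1 - 2 / q)" for \<tau>
  proof -
    have "damping \<tau> = max (- g \<tau>) 0 powr (2 / q) * (f \<tau> powr 1 / f \<tau> powr (2 / q))"
      unfolding damping_def using f_pos[of \<tau>] by (simp add: powr_divide)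
    thus ?thesis by (simp add: powr_diff)
  qed
  ultimately show "damping t \<le> damping s" by (simp add: mult_mono)
qed

lemma damping_eq: "(\<lambda>\<tau>. (max (- g \<tau>) 0 / f \<tau>) powr (2 / q) * f \<tau>) = damping"
  by (simp add: damping_def[abs_def])

abbreviation (input) damped_integral where "damped_integral t \<equiv> exp_weighted_integral a (- 2) damping f t"

lemma damped_integral_nonneg: assumes "a \<le> t" shows "0 \<le> damped_integral t"
proof -
  have "0 \<le> exp (- \<bar>- 2\<bar> * integral {a..t} damping) * f a * (t - a)"
    using f_pos[of a] assms by simp
  also have "\<dots> \<le> damped_integral t"
    by (rule exp_weighted_integral_lower[OF damping_continuous damping_nonneg f_cont f_mono])
       (use f_pos[of a] assms in auto)
  finally show ?thesis .
qed

lemma damping_mult_damped_integral_le: "a \<le> t \<Longrightarrow> 2 * damping t * damped_integral t \<le> f t"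
  by (rule exp_weighted_integral_decay_bound[OF damping_continuous damping_nonneg damping_antimono
      f_cont f_mono]) (use f_pos[of a] in auto)

lemma exp_weighted_integral_f_pos:
  "continuous_on UNIV w \<Longrightarrow> (\<And>x. 0 \<le> w x) \<Longrightarrow> a < t \<Longrightarrow> 0 < exp_weighted_integral a \<kappa> w f t"
  using f_pos by (intro exp_weighted_integral_pos f_cont f_mono)

lemma sqrt_exp_weighted_integral_ge:
  assumes w: "continuous_on UNIV w" "\<And>x. 0 \<le> w x" and t: "a < t" "t \<le> b"
  shows "sqrt (exp (- \<bar>\<kappa>\<bar> * integral {a..b} w) * f a) * sqrt (t - a)
           \<le> sqrt (exp_weighted_integral a \<kappa> w f t)"
proof -
  have "exp (- \<bar>\<kappa>\<bar> * integral {a..b} w) \<le> exp (- \<bar>\<kappa>\<bar> * integral {a..t} w)"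
    using integral_from_mono[OF w, of a t b] t by (simp add: mult_left_mono)
  hence "exp (- \<bar>\<kappa>\<bar> * integral {a..b} w) * f a * (t - a) \<le> exp (- \<bar>\<kappa>\<bar> * integral {a..t} w) * f a * (t - a)"
    using f_pos[of a] t by (intro mult_right_mono) auto
  also have "\<dots> \<le> exp_weighted_integral a \<kappa> w f t"
    using f_pos[of a] t by (intro exp_weighted_integral_lower[OF w f_cont f_mono]) auto
  finally show ?thesis by (simp add: real_sqrt_mult[symmetric])
qed

lemma sqrt_exp_weighted_integral_continuous:
  assumes "continuous_on UNIV w"
  shows "continuous_on {a<..b} (\<lambda>t. sqrt (exp_weighted_integral a \<kappa> w f t))"
  by (intro continuous_on_real_sqrt
      continuous_on_subset[OF exp_weighted_integral_continuous_on[OF assms f_cont]]) auto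

lemma comp_phi_continuous_on:
  "continuous_on {a..\<phi> r} H \<Longrightarrow> r < R \<Longrightarrow> continuous_on {0..r} (\<lambda>u. H (\<phi> u))"
  using continuous_on_compose2 phi_continuous_on phi_image by blast

lemma integral_comp_phi_has_real_derivative:
  assumes "continuous_on UNIV h" "0 < u" "u < R"
  shows "((\<lambda>u. integral {a..\<phi> u} h) has_real_derivative h (\<phi> u) * p u) (at u)"
proof -
  have "a < \<phi> u" using phi_strict_mono[of 0 u] phi_0 assms by simp
  hence "((\<lambda>t. integral {a..t} h) has_real_derivative h (\<phi> u)) (at (\<phi> u))"
    by (intro integral_from_has_real_derivative[where b="\<phi> u + 1"])
       (auto intro: continuous_on_subset[OF assms(1)])
  from DERIV_chain2[OF this phi_deriv] assms show ?thesis by simp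
qed

lemma integral_comp_phi_continuous_on:
  "continuous_on UNIV (h :: real \<Rightarrow> real) \<Longrightarrow> r < R \<Longrightarrow> continuous_on {0..r} (\<lambda>u. integral {a..\<phi> u} h)"
  by (rule comp_phi_continuous_on[where H="\<lambda>t. integral {a..t} h", OF integral_from_continuous_on])

definition rhs where "rhs u = f (\<phi> u) + g (\<phi> u) * p u powr q"

lemma pp_eq: "0 < u \<Longrightarrow> u < R \<Longrightarrow> pp u = rhs u - (c - 1) / u * p u"
  using ode p_abs by (simp add: rhs_def algebra_simps)

lemma pp_le: assumes "0 < u" "u < R"
  shows "pp u \<le> f (\<phi> u) + max (g (\<phi> u)) 0 * p u powr q"
proof -
  have "0 \<le> (c - 1) / u * p u" using c_ge_1 assms p_pos[OF assms] by simp
  moreover have "g (\<phi> u) * p u powr q \<le> max (g (\<phi> u)) 0 * p u powr q"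
    by (intro mult_right_mono) auto
  ultimately show ?thesis using pp_eq[OF assms] by (simp add: rhs_def)
qed

text \<open>A bound \<open>K\<close> for the right-hand side on \<open>(0, r)\<close> bounds the average slope: as long as
  \<open>p v \<ge> v K / c\<close>, the damping term \<open>(c - 1) p / v\<close> keeps \<open>p' \<le> K / c\<close>.\<close>

lemma slope_le_of_rhs_le:
  assumes r: "0 < r" "r < R" and K: "\<And>v. 0 < v \<Longrightarrow> v < r \<Longrightarrow> rhs v \<le> K"
  shows "p r \<le> r * K / c"
proof -
  have "slope r - r * K / c \<le> 0"
  proof (rule nonpos_if_deriv_nonpos_where_pos[where D="\<lambda>v. slope v - v * K / c"])
    show "continuous_on {0..r} (\<lambda>v. slope v - v * K / c)"
      using c_ge_1 by (intro continuous_intros slope_continuous_on[OF r]) auto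
    fix v assume v: "0 < v" "v < r"
    show "((\<lambda>v. slope v - v * K / c) has_real_derivative pp v - K / c) (at v)"
      using slope_has_real_derivative[of v] v r c_ge_1 by (auto intro!: derivative_eq_intros)
    assume "0 < slope v - v * K / c"
    hence "(c - 1) * (v * K / c) \<le> (c - 1) * p v"
      using v c_ge_1 by (intro mult_left_mono) (auto simp: slope_eq)
    hence "(c - 1) * K / c \<le> (c - 1) / v * p v" using v by (simp add: field_simps)
    hence "pp v \<le> K - (c - 1) * K / c" using pp_eq[of v] K[OF v] v r by simp
    also have "\<dots> = K / c" using c_ge_1 by (simp add: field_simps)
    finally show "pp v - K / c \<le> 0" by simp
  qed (use r in \<open>auto simp: slope_def\<close>)
  thus ?thesis using r by (simp add: slope_eq)
qed

lemma slope_le_where_g_neg: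
  assumes u: "0 < u" "u < R" and gu: "g (\<phi> u) < 0"
  shows "p u \<le> u * f (\<phi> u) / c"
proof (rule slope_le_of_rhs_le[OF u])
  fix v assume v: "0 < v" "v < u"
  have "g (\<phi> v) * p v powr q \<le> 0"
    using g_phi_mono[of v u] gu v u by (simp add: mult_nonpos_nonneg)
  thus "rhs v \<le> f (\<phi> u)" using f_phi_mono[of v u] v u by (simp add: rhs_def)
qed

lemma rhs_div_c_le_pp_if_increasing:
  assumes r: "0 < r" "r < R" and gr: "0 \<le> g (\<phi> r)"
    and incr: "\<And>s. 0 < s \<Longrightarrow> s < r \<Longrightarrow> 0 \<le> g (\<phi> s) \<Longrightarrow> 0 \<le> pp s"
  shows "rhs r / c \<le> pp r"
proof -
  have "rhs s \<le> rhs r" if s: "0 < s" "s < r" for s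
  proof (cases "0 \<le> g (\<phi> s)")
    case False
    have "rhs s \<le> f (\<phi> s)" using False p_pos[of s] s r by (auto simp: rhs_def mult_nonpos_nonneg)
    also have "\<dots> \<le> f (\<phi> r)" using f_phi_mono[of s r] s r by simp
    also have "\<dots> \<le> rhs r" using gr by (simp add: rhs_def)
    finally show ?thesis .
  next
    case True
    have "p s \<le> p r"
    proof (rule DERIV_nonneg_imp_increasing_open[OF less_imp_le[OF s(2)]])
      show "\<exists>y. DERIV p x :> y \<and> 0 \<le> y" if "s < x" "x < r" for x
        using True g_phi_mono[of s x] incr[of x] p_deriv[of x] that s r by auto
      show "continuous_on {s..r} p"
        using DERIV_isCont[OF p_deriv] s r by (intro continuous_at_imp_continuous_on) auto
    qed
    hence "p s powr q \<le> p r powr q"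
      using p_pos[of s] s r by (intro powr_mono2) (auto intro: less_imp_le[OF q_pos])
    hence "g (\<phi> s) * p s powr q \<le> g (\<phi> r) * p r powr q"
      using True g_phi_mono[of s r] s r by (intro mult_mono) auto
    thus ?thesis using f_phi_mono[of s r] s r by (simp add: rhs_def)
  qed
  hence "(c - 1) / r * p r \<le> (c - 1) / r * (r * rhs r / c)"
    using slope_le_of_rhs_le[OF r] c_ge_1 r by (intro mult_left_mono) auto
  hence "rhs r - (c - 1) * rhs r / c \<le> pp r" using pp_eq[OF r] r by simp
  moreover have "rhs r - (c - 1) * rhs r / c = rhs r / c" using c_ge_1 by (simp add: field_simps)
  ultimately show ?thesis by simp
qed

text \<open>At a first point \<open>T\<close> with \<open>g (\<phi> T) \<ge> 0\<close> and \<open>p' T \<le> 0\<close>, the previous lemma applies and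
  gives \<open>p' T \<ge> rhs T / c > 0\<close>.\<close>

lemma pp_pos_where_g_nonneg:
  assumes r: "0 < r" "r < R" "0 \<le> g (\<phi> r)" shows "0 < pp r"
proof (rule ccontr)
  assume "\<not> 0 < pp r"
  obtain d where d: "0 < d" "d \<le> R" "\<And>s. 0 < s \<Longrightarrow> s < d \<Longrightarrow> 0 < pp s"
    using obtain_pp_pos_near_0 by blast
  have "isCont (\<lambda>s. g (\<phi> s)) x" if "0 < x" "x < R" for x
    using g_cont isCont_o2[OF DERIV_isCont[OF phi_deriv[OF that]], of g]
    by (simp add: continuous_on_eq_continuous_at)
  hence gc: "continuous_on {d..r} (\<lambda>s. g (\<phi> s))"
    using d r by (intro continuous_at_imp_continuous_on) auto
  moreover have "continuous_on {d..r} pp"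
    by (rule continuous_on_subset[OF pp_cont]) (use d r in auto)
  ultimately have "closed ({s \<in> {d..r}. 0 \<le> g (\<phi> s)} \<inter> {s \<in> {d..r}. pp s \<le> 0})"
    by (intro closed_Int continuous_on_closed_Collect_le continuous_on_const closed_atLeastAtMost)
  moreover have "{s \<in> {d..r}. 0 \<le> g (\<phi> s)} \<inter> {s \<in> {d..r}. pp s \<le> 0} =
      {s \<in> {d..r}. 0 \<le> g (\<phi> s) \<and> pp s \<le> 0}" by blast
  ultimately have "closed {s \<in> {d..r}. 0 \<le> g (\<phi> s) \<and> pp s \<le> 0}" by simp
  then obtain T where T: "d \<le> T" "T \<le> r" "0 \<le> g (\<phi> T)" "pp T \<le> 0"
    and before: "\<And>s. 0 < s \<Longrightarrow> s < T \<Longrightarrow> \<not> (0 \<le> g (\<phi> s) \<and> pp s \<le> 0)"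
  proof (rule obtain_first_point[where P="\<lambda>s. 0 \<le> g (\<phi> s) \<and> pp s \<le> 0"])
    show "\<not> (0 \<le> g (\<phi> s) \<and> pp s \<le> 0)" if "0 < s" "s < d" for s using d(3)[OF that] by simp
  qed (use d r \<open>\<not> 0 < pp r\<close> in auto)
  have T0: "0 < T" "T < R" using T d r by auto
  have "rhs T / c \<le> pp T"
    using before by (intro rhs_div_c_le_pp_if_increasing[OF T0 T(3)]) force
  moreover have "0 < rhs T / c"
    using f_pos[of "\<phi> T"] T(3) c_ge_1 by (simp add: rhs_def add_pos_nonneg)
  ultimately show False using T(4) by simp
qed

lemma rhs_div_c_le_pp: "0 < r \<Longrightarrow> r < R \<Longrightarrow> 0 \<le> g (\<phi> r) \<Longrightarrow> rhs r / c \<le> pp r"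
  using pp_pos_where_g_nonneg by (intro rhs_div_c_le_pp_if_increasing) (auto intro: less_imp_le)

subsection \<open>Gradient estimates\<close>

context
  fixes \<kappa> :: real and w :: "real \<Rightarrow> real"
  assumes w_cont: "continuous_on UNIV w"
begin

abbreviation (input) E where "E t \<equiv> exp_weighted_integral a \<kappa> w f t"

lemma exp_weighted_integral_comp_phi_has_real_derivative:
  assumes "0 < u" "u < R"
  shows "((\<lambda>u. E (\<phi> u)) has_real_derivative (f (\<phi> u) + \<kappa> * w (\<phi> u) * E (\<phi> u)) * p u) (at u)"
proof -
  have "a < \<phi> u" using phi_strict_mono[of 0 u] phi_0 assms by simp
  from DERIV_chain2[OF exp_weighted_integral_has_real_derivative[OF w_cont f_cont this] phi_deriv]
  show ?thesis using assms by simp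
qed

lemma energy_has_real_derivative:
  assumes "0 < u" "u < R"
  shows "((\<lambda>u. (slope u)\<^sup>2 - \<beta> * E (\<phi> u)) has_real_derivative
           p u * (2 * pp u - \<beta> * (f (\<phi> u) + \<kappa> * w (\<phi> u) * E (\<phi> u)))) (at u)"
  using DERIV_diff[OF DERIV_power[OF slope_has_real_derivative[OF assms], of 2]
      DERIV_cmult[OF exp_weighted_integral_comp_phi_has_real_derivative[OF assms], of \<beta>]] assms
  by (simp add: slope_eq algebra_simps)

lemma energy_continuous_on:
  "r < R \<Longrightarrow> 0 < r \<Longrightarrow> continuous_on {0..r} (\<lambda>u. (slope u)\<^sup>2 - \<beta> * E (\<phi> u))"
  by (intro continuous_intros slope_continuous_on comp_phi_continuous_on
      exp_weighted_integral_continuous_on[OF w_cont f_cont])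

text \<open>Multiplying the energy by the integrating factor \<open>exp (- \<kappa> \<integral>\<^sub>a\<^sup>\<phi> w)\<close> removes the
  term \<open>\<kappa> w E\<close> from its derivative.\<close>

lemma weighted_energy_has_real_derivative:
  assumes "0 < u" "u < R"
  shows "((\<lambda>u. exp (- \<kappa> * integral {a..\<phi> u} w) * ((slope u)\<^sup>2 - \<beta> * E (\<phi> u))) has_real_derivative
           exp (- \<kappa> * integral {a..\<phi> u} w) * p u * (2 * pp u - \<kappa> * w (\<phi> u) * (p u)\<^sup>2 - \<beta> * f (\<phi> u)))
           (at u)"
proof -
  have "((\<lambda>u. exp (- \<kappa> * integral {a..\<phi> u} w)) has_real_derivative
      exp (- \<kappa> * integral {a..\<phi> u} w) * (- \<kappa> * (w (\<phi> u) * p u))) (at u)"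
    using DERIV_chain2[OF DERIV_exp
        DERIV_cmult[OF integral_comp_phi_has_real_derivative[OF w_cont assms], of "- \<kappa>"]]
    by simp
  from DERIV_mult[OF this energy_has_real_derivative[OF assms]] assms show ?thesis
    by (simp add: slope_eq algebra_simps power2_eq_square)
qed

lemma slope_sq_le_exp_weighted_integral:
  assumes r: "0 < r" "r < R"
    and ineq: "\<And>u. 0 < u \<Longrightarrow> u < r \<Longrightarrow> 2 * pp u \<le> \<kappa> * w (\<phi> u) * (p u)\<^sup>2 + \<beta> * f (\<phi> u)"
  shows "(p r)\<^sup>2 \<le> \<beta> * E (\<phi> r)"
proof -
  define D where "D u = exp (- \<kappa> * integral {a..\<phi> u} w) * ((slope u)\<^sup>2 - \<beta> * E (\<phi> u))" for u
  define D' where "D' u =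
    exp (- \<kappa> * integral {a..\<phi> u} w) * p u * (2 * pp u - \<kappa> * w (\<phi> u) * (p u)\<^sup>2 - \<beta> * f (\<phi> u))" for u
  have "D r \<le> 0"
  proof (rule nonpos_if_deriv_nonpos_where_pos[where D=D and D'=D'])
    show "continuous_on {0..r} D" unfolding D_def
      using r by (intro continuous_intros integral_comp_phi_continuous_on[OF w_cont] energy_continuous_on)
    show "(D has_real_derivative D' u) (at u)" if "0 < u" "u < r" for u
      unfolding D_def D'_def using weighted_energy_has_real_derivative that r by simp
    show "D' u \<le> 0" if "0 < u" "u < r" for u
      using ineq[OF that] p_pos[of u] that r by (simp add: D'_def mult_nonneg_nonpos)
  qed (use r phi_0 in \<open>auto simp: D_def slope_def\<close>)
  thus ?thesis using r by (simp add: D_def slope_eq mult_le_0_iff)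
qed

lemma exp_weighted_integral_le_slope_sq:
  assumes r: "0 < r" "r < R"
    and ineq: "\<And>u. 0 < u \<Longrightarrow> u < r \<Longrightarrow> \<kappa> * w (\<phi> u) * (p u)\<^sup>2 + \<beta> * f (\<phi> u) \<le> 2 * pp u"
  shows "\<beta> * E (\<phi> r) \<le> (p r)\<^sup>2"
proof -
  define D where "D u = exp (- \<kappa> * integral {a..\<phi> u} w) * ((slope u)\<^sup>2 - \<beta> * E (\<phi> u))" for u
  define D' where "D' u =
    exp (- \<kappa> * integral {a..\<phi> u} w) * p u * (2 * pp u - \<kappa> * w (\<phi> u) * (p u)\<^sup>2 - \<beta> * f (\<phi> u))" for u
  have "0 \<le> D r"
  proof (rule nonneg_if_deriv_nonneg_where_neg[where D=D and D'=D'])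
    show "continuous_on {0..r} D" unfolding D_def
      using r by (intro continuous_intros integral_comp_phi_continuous_on[OF w_cont] energy_continuous_on)
    show "(D has_real_derivative D' u) (at u)" if "0 < u" "u < r" for u
      unfolding D_def D'_def using weighted_energy_has_real_derivative that r by simp
    show "0 \<le> D' u" if "0 < u" "u < r" for u
      using ineq[OF that] p_pos[of u] that r by (simp add: D'_def)
  qed (use r phi_0 in \<open>auto simp: D_def slope_def\<close>)
  thus ?thesis using r by (simp add: D_def slope_eq zero_le_mult_iff)
qed

end

lemma slope_sq_le_if_slope_le:
  assumes s: "0 < s" "s < R" and M: "\<And>u. 0 < u \<Longrightarrow> u < s \<Longrightarrow> p u \<le> M"
  shows "(p s)\<^sup>2 \<le> 2 * integral {a..\<phi> s} f + 2 * M powr q * integral {a..\<phi> s} g_plus"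
proof -
  define D where "D u = (slope u)\<^sup>2 - 2 * integral {a..\<phi> u} f - 2 * M powr q * integral {a..\<phi> u} g_plus"
    for u
  define D' where "D' u = 2 * p u * (pp u - f (\<phi> u) - M powr q * g_plus (\<phi> u))" for u
  have "D s \<le> 0"
  proof (rule nonpos_if_deriv_nonpos_where_pos[where D=D and D'=D'])
    show "continuous_on {0..s} D" unfolding D_def
      by (intro continuous_intros slope_continuous_on[OF s]
          integral_comp_phi_continuous_on f_cont g_plus_continuous s(2))
    fix u assume u: "0 < u" "u < s"
    have uR: "u < R" using u s by simp
    show "(D has_real_derivative D' u) (at u)" unfolding D_def D'_def
      using DERIV_diff[OF DERIV_diff[OF DERIV_power[OF slope_has_real_derivative[OF u(1) uR], of 2]
              DERIV_cmult[OF integral_comp_phi_has_real_derivative[OF f_cont u(1) uR], of 2]]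
            DERIV_cmult[OF integral_comp_phi_has_real_derivative[OF g_plus_continuous u(1) uR],
              of "2 * M powr q"]] u
      by (simp add: slope_eq algebra_simps)
    have "p u powr q \<le> M powr q" using M[OF u] p_pos[OF u(1) uR] q_pos by (intro powr_mono2) auto
    hence "g_plus (\<phi> u) * p u powr q \<le> g_plus (\<phi> u) * M powr q"
      by (intro mult_left_mono g_plus_nonneg)
    hence "pp u - f (\<phi> u) - M powr q * g_plus (\<phi> u) \<le> 0"
      using pp_le[OF u(1) uR] by (simp add: g_plus_def mult.commute)
    thus "D' u \<le> 0" using p_pos[OF u(1) uR] by (simp add: D'_def mult_nonneg_nonpos)
  qed (use s phi_0 in \<open>simp_all add: D_def slope_def\<close>)
  thus ?thesis using s by (simp add: D_def slope_eq)
qed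

text \<open>Apply the previous lemma at a maximum point of \<open>p\<close> on \<open>[0, r]\<close>.\<close>

lemma slope_le_subquadratic:
  assumes q2: "q < 2" and r: "0 < r" "r < R"
  shows "p r \<le> 2 powr (2 / (2 - q)) *
    (sqrt (integral {a..\<phi> r} f) + integral {a..\<phi> r} g_plus powr (1 / (2 - q)))"
proof -
  obtain s0 where s0: "s0 \<in> {0..r}" "\<And>y. y \<in> {0..r} \<Longrightarrow> slope y \<le> slope s0"
    using continuous_attains_sup[OF compact_Icc _ slope_continuous_on[OF r]] r by auto
  define M where "M = slope s0"
  have prM: "p r \<le> M" using s0(2)[of r] r by (simp add: M_def slope_eq)
  hence Mpos: "0 < M" using p_pos[OF r] by simp
  hence s0pos: "0 < s0" using s0(1) by (cases "s0 = 0") (auto simp: M_def slope_def)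
  have s0r: "s0 \<le> r" "s0 < R" using s0(1) r by auto
  have "\<phi> s0 \<le> \<phi> r" using phi_strict_mono[of s0 r] s0r r s0pos by (cases "s0 = r") auto
  have "p u \<le> M" if "0 < u" "u < s0" for u using s0(2)[of u] that s0r by (simp add: M_def slope_eq)
  hence "M\<^sup>2 \<le> 2 * integral {a..\<phi> s0} f + 2 * M powr q * integral {a..\<phi> s0} g_plus"
    using slope_sq_le_if_slope_le[OF s0pos s0r(2)] s0pos by (simp add: M_def slope_eq)
  also have "\<dots> \<le> 2 * integral {a..\<phi> r} f + 2 * M powr q * integral {a..\<phi> r} g_plus"
    using phi_ge_a[of s0] s0r s0pos f_pos \<open>\<phi> s0 \<le> \<phi> r\<close>
    by (intro add_mono mult_left_mono integral_from_mono f_cont g_plus_continuous g_plus_nonneg)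
       (auto simp: less_imp_le)
  finally have "M \<le> 2 powr (2 / (2 - q)) *
      (sqrt (integral {a..\<phi> r} f) + integral {a..\<phi> r} g_plus powr (1 / (2 - q)))"
    using f_pos by (intro le_scaled_sqrt_add_root_if_sq_le Mpos q_pos q2
        integral_from_nonneg f_cont g_plus_continuous g_plus_nonneg) (auto intro: less_imp_le)
  thus ?thesis using prM by simp
qed

lemma slope_sq_le_quadratic:
  assumes q2: "q = 2" and r: "0 < r" "r < R"
  shows "(p r)\<^sup>2 \<le> 2 * exp_weighted_integral a 2 g_plus f (\<phi> r)"
proof (rule slope_sq_le_exp_weighted_integral[OF g_plus_continuous r])
  fix u assume u: "0 < u" "u < r"
  have "pp u \<le> f (\<phi> u) + g_plus (\<phi> u) * (p u)\<^sup>2"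
    using pp_le[of u] powr_numeral[OF less_imp_le[OF p_pos[of u]]] q2 u r by (simp add: g_plus_def)
  thus "2 * pp u \<le> 2 * g_plus (\<phi> u) * (p u)\<^sup>2 + 2 * f (\<phi> u)" by simp
qed

lemma integral_f_le_slope_sq:
  assumes ga: "0 \<le> g a" and r: "0 < r" "r < R"
  shows "2 / c * integral {a..\<phi> r} f \<le> (p r)\<^sup>2"
proof -
  have "2 / c * exp_weighted_integral a 0 g_plus f (\<phi> r) \<le> (p r)\<^sup>2"
  proof (rule exp_weighted_integral_le_slope_sq[OF g_plus_continuous r])
    fix u assume u: "0 < u" "u < r"
    have "0 \<le> g (\<phi> u) * p u powr q" using g_nonneg_if_g_a_nonneg[OF ga, of u] u r by simp
    hence "f (\<phi> u) / c \<le> rhs u / c" using c_ge_1 by (simp add: rhs_def divide_right_mono)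
    also have "\<dots> \<le> pp u" using rhs_div_c_le_pp g_nonneg_if_g_a_nonneg[OF ga, of u] u r by simp
    finally show "0 * g_plus (\<phi> u) * (p u)\<^sup>2 + 2 / c * f (\<phi> u) \<le> 2 * pp u" by simp
  qed
  thus ?thesis by (simp add: exp_weighted_integral_zero_rate)
qed

lemma exp_weighted_integral_le_slope_sq_quadratic:
  assumes ga: "0 \<le> g a" and q2: "q = 2" and r: "0 < r" "r < R"
  shows "2 / c * exp_weighted_integral a (2 / c) g_plus f (\<phi> r) \<le> (p r)\<^sup>2"
proof (rule exp_weighted_integral_le_slope_sq[OF g_plus_continuous r])
  fix u assume u: "0 < u" "u < r"
  have "g_plus (\<phi> u) = g (\<phi> u)"
    using g_nonneg_if_g_a_nonneg[OF ga, of u] u r by (simp add: g_plus_def)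
  moreover have "rhs u = f (\<phi> u) + g (\<phi> u) * (p u)\<^sup>2"
    unfolding rhs_def using powr_numeral[OF less_imp_le[OF p_pos[of u]]] q2 u r by simp
  moreover have "rhs u / c \<le> pp u" using rhs_div_c_le_pp g_nonneg_if_g_a_nonneg[OF ga, of u] u r by simp
  ultimately have "(f (\<phi> u) + g (\<phi> u) * (p u)\<^sup>2) / c \<le> pp u" by simp
  hence "2 * ((f (\<phi> u) + g (\<phi> u) * (p u)\<^sup>2) / c) \<le> 2 * pp u" by (rule mult_left_mono) simp
  moreover have "2 / c * g_plus (\<phi> u) * (p u)\<^sup>2 + 2 / c * f (\<phi> u) =
      2 * ((f (\<phi> u) + g (\<phi> u) * (p u)\<^sup>2) / c)"
    using \<open>g_plus (\<phi> u) = g (\<phi> u)\<close> by (simp add: algebra_simps add_divide_distrib)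
  ultimately show "2 / c * g_plus (\<phi> u) * (p u)\<^sup>2 + 2 / c * f (\<phi> u) \<le> 2 * pp u" by simp
qed

lemma integral_g_plus_le_slope_powr:
  assumes ga: "0 \<le> g a" and q2: "q < 2" and r: "0 < r" "r < R"
  shows "(2 - q) / c * integral {a..\<phi> r} g_plus \<le> p r powr (2 - q)"
proof -
  define D where "D u = (2 - q) / c * integral {a..\<phi> u} g_plus - slope u powr (2 - q)" for u
  define D' where "D' u = (2 - q) / c * (g_plus (\<phi> u) * p u) - (2 - q) * p u powr (1 - q) * pp u" for u
  have "D r \<le> 0"
  proof (rule nonpos_if_deriv_nonpos_where_pos[where D=D and D'=D'])
    have "continuous_on {0..r} (\<lambda>u. slope u powr (2 - q))"
      by (rule continuous_on_powr'[OF slope_continuous_on[OF r] continuous_on_const])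
         (use q2 p_pos r in \<open>auto simp: slope_def less_imp_le\<close>)
    thus "continuous_on {0..r} D" unfolding D_def
      by (rule continuous_on_diff[OF continuous_on_mult[OF continuous_on_const
            integral_comp_phi_continuous_on[OF g_plus_continuous r(2)]]])
    fix u assume u: "0 < u" "u < r"
    have uR: "u < R" using u r by simp
    have pos: "0 < p u" by (rule p_pos[OF u(1) uR])
    have "((\<lambda>u. slope u powr (2 - q)) has_real_derivative (2 - q) * p u powr (1 - q) * pp u) (at u)"
      using DERIV_chain2[OF has_real_derivative_powr[of "slope u" "2 - q"]
          slope_has_real_derivative[OF u(1) uR]]
        pos u by (simp add: slope_eq)
    thus "(D has_real_derivative D' u) (at u)" unfolding D_def D'_def
      by (rule DERIV_diff[OF DERIV_cmult[OF
            integral_comp_phi_has_real_derivative[OF g_plus_continuous u(1) uR]]])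
    have gu: "0 \<le> g (\<phi> u)" by (rule g_nonneg_if_g_a_nonneg[OF ga u(1) uR])
    have "g (\<phi> u) * p u powr q / c \<le> rhs u / c"
      using f_pos[of "\<phi> u"] c_ge_1 by (simp add: rhs_def divide_right_mono)
    also have "\<dots> \<le> pp u" by (rule rhs_div_c_le_pp[OF u(1) uR gu])
    finally have "p u powr (1 - q) * (g (\<phi> u) * p u powr q / c) \<le> p u powr (1 - q) * pp u"
      by (intro mult_left_mono) auto
    moreover have "p u powr (1 - q) * p u powr q = p u" using pos by (simp add: powr_add[symmetric])
    ultimately have "g (\<phi> u) * p u / c \<le> p u powr (1 - q) * pp u"
      by (simp add: algebra_simps)
    hence "(2 - q) * (g (\<phi> u) * p u / c) \<le> (2 - q) * (p u powr (1 - q) * pp u)"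
      using q2 by (intro mult_left_mono) auto
    thus "D' u \<le> 0" using gu by (simp add: D'_def g_plus_def field_simps)
  qed (use r phi_0 in \<open>simp_all add: D_def slope_def\<close>)
  thus ?thesis using r by (simp add: D_def slope_eq)
qed

abbreviation (input) subquadratic_weight where
  "subquadratic_weight t \<equiv> sqrt (integral {a..t} f) + integral {a..t} g_plus powr (1 / (2 - q))"

lemma slope_ge_subquadratic:
  assumes ga: "0 \<le> g a" and q2: "q < 2" and s: "0 < s" "s < R"
  shows "((2 - q) / c) powr (1 / (2 - q)) / 2 * subquadratic_weight (\<phi> s) \<le> p s"
proof -
  define \<kappa> where "\<kappa> = ((2 - q) / c) powr (1 / (2 - q))"
  have ps: "0 < p s" by (rule p_pos[OF s])
  have "sqrt (2 / c * integral {a..\<phi> s} f) \<le> sqrt ((p s)\<^sup>2)"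
    by (rule real_sqrt_le_mono[OF integral_f_le_slope_sq[OF ga s]])
  hence F: "sqrt (2 / c) * sqrt (integral {a..\<phi> s} f) \<le> p s"
    using ps by (simp add: real_sqrt_mult[symmetric])
  have G_nonneg: "0 \<le> integral {a..\<phi> s} g_plus"
    by (rule integral_from_nonneg[OF g_plus_continuous g_plus_nonneg])
  have "((2 - q) / c * integral {a..\<phi> s} g_plus) powr (1 / (2 - q)) \<le> (p s powr (2 - q)) powr (1 / (2 - q))"
    using integral_g_plus_le_slope_powr[OF ga q2 s] q2 c_ge_1 G_nonneg by (auto intro!: powr_mono2)
  moreover have "(p s powr (2 - q)) powr (1 / (2 - q)) = p s" using q2 ps by (simp add: powr_powr)
  moreover have "((2 - q) / c * integral {a..\<phi> s} g_plus) powr (1 / (2 - q))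
      = \<kappa> * integral {a..\<phi> s} g_plus powr (1 / (2 - q))"
    unfolding \<kappa>_def using q2 c_ge_1 G_nonneg powr_mult[of "(2 - q) / c" "integral {a..\<phi> s} g_plus"]
    by simp
  ultimately have G: "\<kappa> * integral {a..\<phi> s} g_plus powr (1 / (2 - q)) \<le> p s" by simp
  have "\<kappa> * sqrt (integral {a..\<phi> s} f) \<le> sqrt (2 / c) * sqrt (integral {a..\<phi> s} f)"
    unfolding \<kappa>_def using scaled_root_le_sqrt[OF q_pos q2 c_ge_1] integral_f_nonneg
    by (intro mult_right_mono) auto
  with F G show ?thesis by (simp add: \<kappa>_def algebra_simps)
qed

text \<open>Where \<open>g (\<phi> u) < 0\<close>, Young's inequality splits \<open>g\<^sup>- p\<^sup>q\<close> into a multiple of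
  \<open>damping p\<^sup>2\<close> and a fraction of \<open>f\<close>; the estimate \<open>2 damping damped_integral \<le> f\<close> absorbs the rest.\<close>

lemma pp_lower_where_g_neg:
  assumes u: "0 < u" "u < R" and gu: "g (\<phi> u) < 0"
    and below: "(p u)\<^sup>2 \<le> q * c powr (-2/q) * damped_integral (\<phi> u)"
  shows "q * c powr (-2/q) * (f (\<phi> u) - 2 * damping (\<phi> u) * damped_integral (\<phi> u)) \<le> 2 * pp u"
proof -
  define \<Lambda> where "\<Lambda> = q * c powr (-2/q)"
  define C where "C = c powr (2/q - 1)"
  define F where "F = f (\<phi> u)"
  define Ku where "Ku = damped_integral (\<phi> u)"
  define hu where "hu = damping (\<phi> u)"
  define gm where "gm = - g (\<phi> u)"
  have F: "0 < F" by (simp add: F_def f_pos)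
  have gm: "0 \<le> gm" using gu by (simp add: gm_def)
  have pos: "0 < p u" by (rule p_pos[OF u])
  have au: "a \<le> \<phi> u" using phi_ge_a[of u] u by simp
  have hu: "hu = (gm / F) powr (2/q) * F" using gu by (simp add: hu_def damping_def gm_def F_def)
  have "(c - 1) / u * p u \<le> (c - 1) / u * (u * F / c)"
    using slope_le_where_g_neg[OF u gu] c_ge_1 u by (intro mult_left_mono) (auto simp: F_def)
  hence "F - gm * p u powr q - (c - 1) * F / c \<le> pp u"
    using pp_eq[OF u] u by (simp add: rhs_def F_def gm_def)
  moreover have "gm * p u powr q \<le> (q/2) * C * hu * (p u)\<^sup>2 + ((2-q)/(2*c)) * F"
    using young_powr_half_split[OF q_pos q_le_2 c_ge_1 gm F, of "(p u)\<^sup>2"]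
    by (simp add: powr_half_square[OF pos] hu C_def)
  moreover have "F - (c - 1) * F / c - ((2-q)/(2*c)) * F = (q / (2*c)) * F"
    using c_ge_1 by (simp add: field_simps)
  ultimately have "(q / (2*c)) * F - (q/2) * C * hu * (p u)\<^sup>2 \<le> pp u" by linarith
  moreover have "(q / c) * F - q * C * hu * (p u)\<^sup>2 = 2 * ((q / (2*c)) * F - (q/2) * C * hu * (p u)\<^sup>2)"
    by (simp add: field_simps)
  ultimately have "(q / c) * F - q * C * hu * (p u)\<^sup>2 \<le> 2 * pp u" by linarith
  moreover have "q * C * hu * (p u)\<^sup>2 \<le> q * C * hu * (\<Lambda> * Ku)"
    using below q_pos damping_nonneg[of "\<phi> u"]
    by (intro mult_left_mono) (auto simp: \<Lambda>_def Ku_def hu_def C_def)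
  moreover have "0 \<le> (q/c - \<Lambda>) * F + \<Lambda> * (hu * Ku) * (2 - q * C)"
    unfolding \<Lambda>_def C_def
    by (rule barrier_coefficient_nonneg[OF q_pos q_le_2 c_ge_1])
       (use damped_integral_nonneg[OF au] damping_nonneg[of "\<phi> u"]
          damping_mult_damped_integral_le[OF au] in \<open>auto simp: hu_def Ku_def F_def\<close>)
  ultimately have "\<Lambda> * (F - 2 * hu * Ku) \<le> 2 * pp u" by (simp add: algebra_simps)
  thus ?thesis by (simp add: \<Lambda>_def F_def hu_def Ku_def)
qed

lemma damped_integral_le_slope_sq:
  assumes r: "0 < r" "r < R"
  shows "q * c powr (-2/q) * damped_integral (\<phi> r) \<le> (p r)\<^sup>2"
proof -
  define \<Lambda> where "\<Lambda> = q * c powr (-2/q)"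
  define D where "D u = (slope u)\<^sup>2 - \<Lambda> * damped_integral (\<phi> u)" for u
  define D' where "D' u = p u * (2 * pp u - \<Lambda> * (f (\<phi> u) + - 2 * damping (\<phi> u) * damped_integral (\<phi> u)))" for u
  have "0 \<le> D r"
  proof (rule nonneg_if_deriv_nonneg_where_neg[where D=D and D'=D'])
    show "continuous_on {0..r} D"
      unfolding D_def by (rule energy_continuous_on[OF damping_continuous r(2,1)])
    fix u assume u: "0 < u" "u < r"
    have uR: "u < R" using u r by simp
    show "(D has_real_derivative D' u) (at u)"
      unfolding D_def D'_def by (rule energy_has_real_derivative[OF damping_continuous u(1) uR])
    assume "D u < 0"
    hence below: "(p u)\<^sup>2 \<le> \<Lambda> * damped_integral (\<phi> u)" using u by (simp add: D_def slope_eq)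
    have "\<Lambda> * (f (\<phi> u) - 2 * damping (\<phi> u) * damped_integral (\<phi> u)) \<le> 2 * pp u"
    proof (cases "0 \<le> g (\<phi> u)")
      case True
      have "\<Lambda> * f (\<phi> u) \<le> 2 / c * f (\<phi> u)"
        using scaled_powr_le_two_div[OF q_pos q_le_2 c_ge_1] f_pos[of "\<phi> u"]
        by (intro mult_right_mono) (auto simp: \<Lambda>_def)
      moreover have "f (\<phi> u) \<le> rhs u" using True p_pos[OF u(1) uR] by (simp add: rhs_def)
      hence "f (\<phi> u) / c \<le> rhs u / c" using c_ge_1 by (simp add: divide_right_mono)
      ultimately have "\<Lambda> * f (\<phi> u) \<le> 2 * pp u"
        using rhs_div_c_le_pp[OF u(1) uR True] by simp
      thus ?thesis using True by (simp add: damping_def)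
    next
      case False
      thus ?thesis using pp_lower_where_g_neg[OF u(1) uR] below by (simp add: \<Lambda>_def)
    qed
    thus "0 \<le> D' u" using p_pos[OF u(1) uR] by (simp add: D'_def)
  qed (use r phi_0 in \<open>simp_all add: D_def slope_def\<close>)
  thus ?thesis using r by (simp add: D_def \<Lambda>_def slope_eq)
qed

lemma slope_sq_le_damped_integral:
  assumes g_nonpos: "\<And>t. g t \<le> 0" and r: "0 < r" "r < R"
  shows "(p r)\<^sup>2 \<le> 2 * damped_integral (\<phi> r)"
proof -
  define D where "D u = (slope u)\<^sup>2 - 2 * damped_integral (\<phi> u)" for u
  define D' where "D' u = p u * (2 * pp u - 2 * (f (\<phi> u) + - 2 * damping (\<phi> u) * damped_integral (\<phi> u)))" for u
  have "D r \<le> 0"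
  proof (rule nonpos_if_deriv_nonpos_where_pos[where D=D and D'=D'])
    show "continuous_on {0..r} D"
      unfolding D_def by (rule energy_continuous_on[OF damping_continuous r(2,1)])
    fix u assume u: "0 < u" "u < r"
    have uR: "u < R" using u r by simp
    show "(D has_real_derivative D' u) (at u)"
      unfolding D_def D'_def by (rule energy_has_real_derivative[OF damping_continuous u(1) uR])
    assume "0 < D u"
    hence above: "2 * damped_integral (\<phi> u) \<le> (p u)\<^sup>2" using u by (simp add: D_def slope_eq)
    define F where "F = f (\<phi> u)"
    define gm where "gm = - g (\<phi> u)"
    have F: "0 < F" by (simp add: F_def f_pos)
    have gm: "0 \<le> gm" using g_nonpos[of "\<phi> u"] by (simp add: gm_def)
    have pos: "0 < p u" by (rule p_pos[OF u(1) uR])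
    have au: "a \<le> \<phi> u" using phi_ge_a[of u] u uR by simp
    have hu: "damping (\<phi> u) = (gm / F) powr (2/q) * F"
      using g_nonpos[of "\<phi> u"] by (simp add: damping_def gm_def F_def)
    have "(gm / F) powr (2/q) * F * (2 * damped_integral (\<phi> u)) \<le> gm * ((p u)\<^sup>2) powr (q/2)"
      using damped_integral_nonneg[OF au] damping_mult_damped_integral_le[OF au] above hu
      by (intro le_powr_half_if_weighted_le[OF q_pos q_le_2 gm F]) (auto simp: F_def algebra_simps)
    hence "2 * damping (\<phi> u) * damped_integral (\<phi> u) \<le> gm * p u powr q"
      by (simp add: powr_half_square[OF pos] hu algebra_simps)
    moreover have "0 \<le> (c - 1) / u * p u" using c_ge_1 u pos by simp
    ultimately have "pp u \<le> F - 2 * damping (\<phi> u) * damped_integral (\<phi> u)"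
      using pp_eq[OF u(1) uR] by (simp add: rhs_def F_def gm_def)
    thus "D' u \<le> 0" using pos by (simp add: D'_def F_def mult_nonneg_nonpos)
  qed (use r phi_0 in \<open>simp_all add: D_def slope_def\<close>)
  thus ?thesis using r by (simp add: D_def slope_eq)
qed

subsection \<open>Radius estimates\<close>

lemma radius_ge_integral:
  assumes r: "0 < r" "r < R" and hc: "continuous_on {a<..\<phi> r} h"
    and hpos: "\<And>t. a < t \<Longrightarrow> t \<le> \<phi> r \<Longrightarrow> 0 < h t"
    and M: "0 \<le> M" and bound: "\<And>s. 0 < s \<Longrightarrow> s < r \<Longrightarrow> p s \<le> M * h (\<phi> s)"
  shows "integral {a..\<phi> r} (\<lambda>t. 1 / h t) \<le> M * r"
proof (rule integral_range_le[OF r(1) phi_continuous_on[OF r(2)] phi_0 _ _ _ _ M])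
  show "(\<phi> has_real_derivative p s) (at s)" if "0 < s" "s < r" for s using phi_deriv that r by simp
  show "a < \<phi> s \<and> \<phi> s < \<phi> r" if "0 < s" "s < r" for s using phi_between that r by simp
  show "continuous_on {a<..\<phi> r} (\<lambda>t. 1 / h t)"
    using hpos by (intro continuous_on_divide continuous_on_const hc) force
  show "p s * (1 / h (\<phi> s)) \<le> M" if "0 < s" "s < r" for s
    using bound[OF that] hpos[of "\<phi> s"] phi_between[OF that r(2)] by (simp add: divide_le_eq)
qed

lemma radius_le_integral:
  assumes r: "0 < r" "r < R" and hc: "continuous_on {a<..\<phi> r} h"
    and lower: "\<And>t. a < t \<Longrightarrow> t \<le> \<phi> r \<Longrightarrow> m * sqrt (t - a) \<le> h t" and m: "0 < m"
    and bound: "\<And>s. 0 < s \<Longrightarrow> s < r \<Longrightarrow> M * h (\<phi> s) \<le> p s"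
  shows "M * r \<le> integral {a..\<phi> r} (\<lambda>t. 1 / h t)"
proof -
  have root_pos: "0 < m * sqrt (t - a)" if "a < t" for t using m that by simp
  have hpos: "0 < h t" if "a < t" "t \<le> \<phi> r" for t
    using lower[OF that] root_pos[OF that(1)] by linarith
  have kc: "continuous_on {a<..\<phi> r} (\<lambda>t. 1 / h t)"
    using hpos by (intro continuous_on_divide continuous_on_const hc) force
  show ?thesis
  proof (rule integral_range_ge[OF r(1) phi_continuous_on[OF r(2)] phi_0 _ _ kc])
    show "(\<phi> has_real_derivative p s) (at s)" if "0 < s" "s < r" for s using phi_deriv that r by simp
    show "a < \<phi> s \<and> \<phi> s < \<phi> r" if "0 < s" "s < r" for s using phi_between that r by simp
    show "(\<lambda>t. 1 / h t) integrable_on {a..\<phi> r}"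
    proof (rule integrable_if_bounded_by_inv_sqrt[OF _ kc])
      show "a \<le> \<phi> r" using phi_ge_a r by simp
      fix t assume t: "a < t" "t \<le> \<phi> r"
      have "1 / h t \<le> 1 / (m * sqrt (t - a))"
        using lower[OF t] root_pos[OF t(1)] by (intro divide_left_mono) auto
      thus "0 \<le> 1 / h t \<and> 1 / h t \<le> (1 / m) / sqrt (t - a)" using hpos[OF t] by simp
    qed
    show "M \<le> p s * (1 / h (\<phi> s))" if "0 < s" "s < r" for s
      using bound[OF that] hpos[of "\<phi> s"] phi_between[OF that r(2)] by (simp add: le_divide_eq)
  qed
qed

lemma subquadratic_weight_continuous:
  assumes "q < 2" shows "continuous_on {a<..b} (\<lambda>t. subquadratic_weight t)"
proof -
  have "continuous_on {a<..b} (\<lambda>t. integral {a..t} g_plus)"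
    by (rule continuous_on_subset[OF integral_from_continuous_on[OF g_plus_continuous]]) auto
  hence "continuous_on {a<..b} (\<lambda>t. integral {a..t} g_plus powr (1 / (2 - q)))"
    by (rule continuous_on_powr'[OF _ continuous_on_const])
       (use assms integral_from_nonneg[OF g_plus_continuous g_plus_nonneg] in auto)
  moreover have "continuous_on {a<..b} (\<lambda>t. integral {a..t} f)"
    by (rule continuous_on_subset[OF integral_from_continuous_on[OF f_cont]]) auto
  ultimately show ?thesis by (intro continuous_on_add continuous_on_real_sqrt)
qed

lemma subquadratic_weight_ge: "a < t \<Longrightarrow> sqrt (f a) * sqrt (t - a) \<le> subquadratic_weight t"
  using integral_f_ge[of t] integral_from_nonneg[OF g_plus_continuous g_plus_nonneg, of a t]
  by (simp add: real_sqrt_mult[symmetric] add_increasing2)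

lemma radius_lower_bound:
  assumes r: "0 \<le> r" "r < R"
  shows "r \<ge>
        (if q < 2 then
           1 / 2 powr (2 / (2 - q)) *
             oint a (\<phi> r) (\<lambda>t. 1 / (sqrt (oint a t f) + (oint a t (\<lambda>s. max (g s) 0)) powr (1 / (2 - q))))
         else
           oint a (\<phi> r) (\<lambda>t. 1 / sqrt (2 * oint a t (\<lambda>s. exp (2 * oint s t (\<lambda>\<rho>. max (g \<rho>) 0)) * f s))))"
proof (cases "r = 0")
  case True thus ?thesis by (simp add: phi_0 oint_def)
next
  case False
  hence r0: "0 < r" using r by simp
  have ab: "a \<le> \<phi> r" using a_less_phi[OF r0 r(2)] by simp
  show ?thesis
  proof (cases "q < 2")
    case q2: True
    have "integral {a..\<phi> r} (\<lambda>t. 1 / subquadratic_weight t) \<le> 2 powr (2 / (2 - q)) * r"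
    proof (rule radius_ge_integral[OF r0 r(2) subquadratic_weight_continuous[OF q2]])
      show "0 < subquadratic_weight t" if "a < t" "t \<le> \<phi> r" for t
        using integral_f_pos[OF that(1)] by (simp add: add_pos_nonneg)
      show "p s \<le> 2 powr (2 / (2 - q)) * subquadratic_weight (\<phi> s)" if "0 < s" "s < r" for s
        using slope_le_subquadratic[OF q2 that(1)] that r by simp
    qed simp
    moreover have "oint a (\<phi> r) (\<lambda>t. 1 / (sqrt (oint a t f) + (oint a t (\<lambda>s. max (g s) 0)) powr (1 / (2 - q))))
        = integral {a..\<phi> r} (\<lambda>t. 1 / subquadratic_weight t)"
      using ab by (intro oint_eq_integral_cong) (simp_all add: oint_def g_plus_eq)
    ultimately show ?thesis using q2 by (simp add: field_simps)
  next
    case False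
    hence q2: "q = 2" using q_le_2 by simp
    have "integral {a..\<phi> r} (\<lambda>t. 1 / (sqrt 2 * sqrt (exp_weighted_integral a 2 g_plus f t))) \<le> 1 * r"
    proof (rule radius_ge_integral[OF r0 r(2) continuous_on_mult[OF continuous_on_const
          sqrt_exp_weighted_integral_continuous[OF g_plus_continuous]]])
      show "0 < sqrt 2 * sqrt (exp_weighted_integral a 2 g_plus f t)" if "a < t" for t
        using exp_weighted_integral_f_pos[OF g_plus_continuous g_plus_nonneg that] by simp
      show "p s \<le> 1 * (sqrt 2 * sqrt (exp_weighted_integral a 2 g_plus f (\<phi> s)))"
        if "0 < s" "s < r" for s
        using slope_sq_le_quadratic[OF q2 that(1)] p_pos[OF that(1)] that r
        by (simp add: real_le_rsqrt real_sqrt_mult[symmetric])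
    qed simp
    moreover have "oint a (\<phi> r) (\<lambda>t. 1 / sqrt (2 * oint a t (\<lambda>s. exp (2 * oint s t (\<lambda>\<rho>. max (g \<rho>) 0)) * f s)))
        = integral {a..\<phi> r} (\<lambda>t. 1 / (sqrt 2 * sqrt (exp_weighted_integral a 2 g_plus f t)))"
      using ab by (intro oint_eq_integral_cong) (simp_all add: oint_exp_weighted g_plus_eq real_sqrt_mult)
    ultimately show ?thesis using False by simp
  qed
qed

lemma radius_upper_bound:
  assumes ga: "0 \<le> g a" and r: "0 \<le> r" "r < R"
  shows "r \<le>
        (if q < 2 then
           2 * (c / (2 - q)) powr (1 / (2 - q)) *
             oint a (\<phi> r) (\<lambda>t. 1 / (sqrt (oint a t f) + (oint a t (\<lambda>s. max (g s) 0)) powr (1 / (2 - q))))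
         else
           sqrt (c / 2) *
             oint a (\<phi> r) (\<lambda>t. 1 / sqrt (oint a t (\<lambda>s. exp (2 / c * oint s t (\<lambda>\<tau>. max (g \<tau>) 0)) * f s))))"
proof (cases "r = 0")
  case True thus ?thesis by (simp add: phi_0 oint_def)
next
  case False
  hence r0: "0 < r" using r by simp
  have ab: "a \<le> \<phi> r" using a_less_phi[OF r0 r(2)] by simp
  show ?thesis
  proof (cases "q < 2")
    case q2: True
    define \<kappa> where "\<kappa> = ((2 - q) / c) powr (1 / (2 - q))"
    have "\<kappa> / 2 * r \<le> integral {a..\<phi> r} (\<lambda>t. 1 / subquadratic_weight t)"
    proof (rule radius_le_integral[OF r0 r(2) subquadratic_weight_continuous[OF q2]])
      show "sqrt (f a) * sqrt (t - a) \<le> subquadratic_weight t" if "a < t" for t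
        by (rule subquadratic_weight_ge[OF that])
      show "\<kappa> / 2 * subquadratic_weight (\<phi> s) \<le> p s" if "0 < s" "s < r" for s
        unfolding \<kappa>_def using slope_ge_subquadratic[OF ga q2 that(1)] that r by simp
    qed (use f_pos in simp)
    moreover have "0 < \<kappa>" using q2 c_ge_1 by (simp add: \<kappa>_def)
    ultimately have "r \<le> 2 / \<kappa> * integral {a..\<phi> r} (\<lambda>t. 1 / subquadratic_weight t)"
      by (simp add: field_simps)
    also have "2 / \<kappa> = 2 * (c / (2 - q)) powr (1 / (2 - q))"
      using q2 c_ge_1 by (simp add: \<kappa>_def powr_divide)
    also have "integral {a..\<phi> r} (\<lambda>t. 1 / subquadratic_weight t) =
        oint a (\<phi> r) (\<lambda>t. 1 / (sqrt (oint a t f) + (oint a t (\<lambda>s. max (g s) 0)) powr (1 / (2 - q))))"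
      using ab by (intro oint_eq_integral_cong[symmetric]) (simp_all add: oint_def g_plus_eq)
    finally show ?thesis using q2 by simp
  next
    case False
    hence q2: "q = 2" using q_le_2 by simp
    have "sqrt (2 / c) * r \<le> integral {a..\<phi> r} (\<lambda>t. 1 / sqrt (exp_weighted_integral a (2 / c) g_plus f t))"
    proof (rule radius_le_integral[OF r0 r(2) sqrt_exp_weighted_integral_continuous[OF g_plus_continuous]])
      show "sqrt (exp (- \<bar>2 / c\<bar> * integral {a..\<phi> r} g_plus) * f a) * sqrt (t - a)
          \<le> sqrt (exp_weighted_integral a (2 / c) g_plus f t)" if "a < t" "t \<le> \<phi> r" for t
        using sqrt_exp_weighted_integral_ge[OF g_plus_continuous g_plus_nonneg that, where \<kappa>="2 / c"]
        by simp
      show "sqrt (2 / c) * sqrt (exp_weighted_integral a (2 / c) g_plus f (\<phi> s)) \<le> p s"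
        if "0 < s" "s < r" for s
        using real_sqrt_le_mono[OF exp_weighted_integral_le_slope_sq_quadratic[OF ga q2 that(1)]]
          p_pos[OF that(1)] that r
        by (simp add: real_sqrt_mult[symmetric])
    qed (use f_pos in simp)
    moreover have "oint a (\<phi> r) (\<lambda>t. 1 / sqrt (oint a t (\<lambda>s. exp (2 / c * oint s t (\<lambda>\<tau>. max (g \<tau>) 0)) * f s)))
        = integral {a..\<phi> r} (\<lambda>t. 1 / sqrt (exp_weighted_integral a (2 / c) g_plus f t))"
      using ab by (intro oint_eq_integral_cong) (simp_all only: oint_exp_weighted g_plus_eq)
    ultimately show ?thesis using False c_ge_1 by (simp add: real_sqrt_divide field_simps)
  qed
qed

lemma oint_damped_weight_eq:
  "a \<le> b \<Longrightarrow> oint a b (\<lambda>t. 1 / sqrt (oint a t (\<lambda>s.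
       exp (- 2 * oint s t (\<lambda>\<tau>. (max (- g \<tau>) 0 / f \<tau>) powr (2 / q) * f \<tau>)) * f s)))
     = integral {a..b} (\<lambda>t. 1 / sqrt (damped_integral t))"
  by (intro oint_eq_integral_cong) (simp_all only: damping_eq oint_exp_weighted)

lemma radius_upper_bound_damped:
  assumes r: "0 < r" "r < R"
  shows "r \<le> c powr (1 / q) / sqrt q *
          oint a (\<phi> r) (\<lambda>t. 1 / sqrt (oint a t (\<lambda>s.
             exp (- 2 * oint s t (\<lambda>\<tau>. (max (- g \<tau>) 0 / f \<tau>) powr (2 / q) * f \<tau>)) * f s)))"
proof -
  define M where "M = sqrt q * sqrt (c powr (-2/q))"
  have "M * r \<le> integral {a..\<phi> r} (\<lambda>t. 1 / sqrt (damped_integral t))"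
  proof (rule radius_le_integral[OF r sqrt_exp_weighted_integral_continuous[OF damping_continuous]])
    show "sqrt (exp (- \<bar>- 2\<bar> * integral {a..\<phi> r} damping) * f a) * sqrt (t - a) \<le> sqrt (damped_integral t)"
      if "a < t" "t \<le> \<phi> r" for t
      using sqrt_exp_weighted_integral_ge[OF damping_continuous damping_nonneg that, where \<kappa>="- 2"]
      by simp
    show "M * sqrt (damped_integral (\<phi> s)) \<le> p s" if "0 < s" "s < r" for s
      using real_sqrt_le_mono[OF damped_integral_le_slope_sq[OF that(1)]] p_pos[OF that(1)] that r
      by (simp add: M_def real_sqrt_mult[symmetric])
  qed (use f_pos in simp)
  moreover have "0 < M" using q_pos c_ge_1 by (simp add: M_def)
  ultimately have "r \<le> 1 / M * integral {a..\<phi> r} (\<lambda>t. 1 / sqrt (damped_integral t))"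
    by (simp add: field_simps)
  also have "1 / M = c powr (1 / q) / sqrt q"
  proof -
    have "sqrt (c powr (-2/q)) = c powr (-2/q * (1/2))"
      using c_ge_1 by (simp add: powr_half_sqrt[symmetric] powr_powr)
    thus ?thesis using c_ge_1 by (simp add: M_def powr_minus_divide)
  qed
  finally show ?thesis using oint_damped_weight_eq a_less_phi[OF r] by simp
qed

lemma radius_lower_bound_damped:
  assumes g_nonpos: "\<forall>t. g t \<le> 0" and r: "0 < r" "r < R"
  shows "1 / sqrt 2 *
          oint a (\<phi> r) (\<lambda>t. 1 / sqrt (oint a t (\<lambda>s.
             exp (- 2 * oint s t (\<lambda>\<tau>. (max (- g \<tau>) 0 / f \<tau>) powr (2 / q) * f \<tau>)) * f s))) \<le> r"
proof -
  have "integral {a..\<phi> r} (\<lambda>t. 1 / sqrt (damped_integral t)) \<le> sqrt 2 * r"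
  proof (rule radius_ge_integral[OF r sqrt_exp_weighted_integral_continuous[OF damping_continuous]])
    show "0 < sqrt (damped_integral t)" if "a < t" for t
      using exp_weighted_integral_f_pos[OF damping_continuous damping_nonneg that] by simp
    show "p s \<le> sqrt 2 * sqrt (damped_integral (\<phi> s))" if "0 < s" "s < r" for s
      using real_sqrt_le_mono[OF slope_sq_le_damped_integral[OF _ that(1)]] g_nonpos
        p_pos[OF that(1)] that r
      by (simp add: real_sqrt_mult[symmetric])
  qed simp
  thus ?thesis using oint_damped_weight_eq a_less_phi[OF r] by (simp add: field_simps)
qed

end

theorem lemma2p3:
  fixes q c a R :: real and f g \<phi> :: "real \<Rightarrow> real"
  assumes q: "0 < q" "q \<le> 2"
    and c: "c \<ge> 1"
    and f_cont: "continuous_on UNIV f" and f_mono: "mono f" and f_pos: "\<And>x. f x > 0"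
    and g_cont: "continuous_on UNIV g" and g_mono: "mono g"
    and R: "R > 0"
    and sol: "ode_solution q c f g a R \<phi>"
  shows
    "(\<forall>r\<in>{0..<R}. r \<ge>
        (if q < 2 then
           1 / 2 powr (2 / (2 - q)) *
             oint a (\<phi> r) (\<lambda>t. 1 / (sqrt (oint a t f) + (oint a t (\<lambda>s. max (g s) 0)) powr (1 / (2 - q))))
         else
           oint a (\<phi> r) (\<lambda>t. 1 / sqrt (2 * oint a t (\<lambda>s. exp (2 * oint s t (\<lambda>\<rho>. max (g \<rho>) 0)) * f s)))))
     \<and> (g a \<ge> 0 \<longrightarrow> (\<forall>r\<in>{0..<R}. r \<le>
        (if q < 2 then
           2 * (c / (2 - q)) powr (1 / (2 - q)) *
             oint a (\<phi> r) (\<lambda>t. 1 / (sqrt (oint a t f) + (oint a t (\<lambda>s. max (g s) 0)) powr (1 / (2 - q))))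
         else
           sqrt (c / 2) *
             oint a (\<phi> r) (\<lambda>t. 1 / sqrt (oint a t (\<lambda>s. exp (2 / c * oint s t (\<lambda>\<tau>. max (g \<tau>) 0)) * f s))))))
     \<and> (\<forall>r\<in>{0<..<R}. r \<le>
        c powr (1 / q) / sqrt q *
          oint a (\<phi> r) (\<lambda>t. 1 / sqrt (oint a t (\<lambda>s.
             exp (- 2 * oint s t (\<lambda>\<tau>. (max (- g \<tau>) 0 / f \<tau>) powr (2 / q) * f \<tau>)) * f s))))
     \<and> ((\<forall>t. g t \<le> 0) \<longrightarrow> (\<forall>r\<in>{0<..<R}. r \<ge>
        1 / sqrt 2 *
          oint a (\<phi> r) (\<lambda>t. 1 / sqrt (oint a t (\<lambda>s.
             exp (- 2 * oint s t (\<lambda>\<tau>. (max (- g \<tau>) 0 / f \<tau>) powr (2 / q) * f \<tau>)) * f s)))))"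
proof -
  from sol obtain p pp L where
    phi_cont: "continuous_on {0..<R} \<phi>" and
    deriv: "\<forall>r\<in>{0<..<R}. (\<phi> has_real_derivative p r) (at r) \<and> (p has_real_derivative pp r) (at r)" and
    pp_cont: "continuous_on {0<..<R} pp" and
    ode: "\<forall>r\<in>{0<..<R}. pp r + (c - 1) / r * p r = f (\<phi> r) + g (\<phi> r) * \<bar>p r\<bar> powr q" and
    init: "\<phi> 0 = a" "(p \<longlongrightarrow> 0) (at_right 0)" "(pp \<longlongrightarrow> L) (at_right 0)"
    unfolding ode_solution_def by blast
  interpret radial_solution q c a R L f g \<phi> p pp
    using assms phi_cont deriv pp_cont ode init by unfold_locales auto
  show ?thesis
    using radius_lower_bound radius_upper_bound radius_upper_bound_damped radius_lower_bound_damped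
    by auto
qed

end
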